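(* Let $(A,d,F)$ be a filtered complex. There is a filtered homotopy transfer diagram consisting of a filtered complex $(M,d,F)$, morphisms of filtered complexes $f:(A,d,F)\to (M,d,F)$ and $g:(M,d,F)\to (A,d,F)$, and a filtered homotopy $h$ from the identity of $A$ to $gf$, where $(M,d,F)$ is such that \[F^pM^n\cong \bigoplus_{q\geq p}E^{q,n-q}_1(A)\text{ and }d(F^pM)\subseteq F^{p+1}M.\] Furthermore, the maps $f$ and $g$ are filtered quasi-isomorphisms.
   Context: All filtered complexes $(A,d,F)$ are cochain complexes over a field $\mathbf{k}$ with bounded below, exhaustive, decreasing filtrations $F^{p+1}A\subseteq F^pA$ satisfying $d(F^pA^n)\subseteq F^pA^{n+1}$. $E_1(A)$ denotes the first page of the spectral sequence associated to the filtration. A morphism of filtered complexes $f$ is a filtered quasi-isomorphism if each restriction $F^pf$ is a quasi-isomorphism. A filtered homotopy from $f$ to $g$ (maps $A\to B$ of filtered complexes) is a map $h:A\to B[-1]$ with $h(F^pA^n)\subseteq F^pB^{n-1}$ and $hd+dh=f-g$. A filtered homotopy transfer diagram between $(A,d,F)$ and $(B,d,F)$ consists of morphisms of filtered complexes $f:A\to B$, $g:B\to A$ and a filtered homotopy $h$ from the identity of $A$ to $gf$. *)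

theory Defs
  imports Main "HOL.Vector_Spaces"
begin

text \<open>
  Graded vector spaces over a field are modelled inside an ambient type 'a on which
  the field 'k acts by the scalar multiplication s (assumed to be a vector space).
  A decreasing filtration is F :: int => int => 'a set with F p n the piece F^p C^n.
\<close>

definition subsp :: "('k::field \<Rightarrow> 'a::ab_group_add \<Rightarrow> 'a) \<Rightarrow> 'a set \<Rightarrow> bool" where
  "subsp s S \<longleftrightarrow> 0 \<in> S \<and> (\<forall>x\<in>S. \<forall>y\<in>S. x + y \<in> S) \<and> (\<forall>c. \<forall>x\<in>S. s c x \<in> S)"

definition lin_on :: "('k::field \<Rightarrow> 'a::ab_group_add \<Rightarrow> 'a) \<Rightarrow> 'a set \<Rightarrow> ('a \<Rightarrow> 'a) \<Rightarrow> bool" where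
  "lin_on s V f \<longleftrightarrow>
     (\<forall>x\<in>V. \<forall>y\<in>V. f (x + y) = f x + f y) \<and> (\<forall>c. \<forall>x\<in>V. f (s c x) = s c (f x))"

definition cochain_complex ::
  "('k::field \<Rightarrow> 'a::ab_group_add \<Rightarrow> 'a) \<Rightarrow> (int \<Rightarrow> 'a set) \<Rightarrow> (int \<Rightarrow> 'a \<Rightarrow> 'a) \<Rightarrow> bool" where
  "cochain_complex s C d \<longleftrightarrow>
     (\<forall>n. subsp s (C n)) \<and>
     (\<forall>n. lin_on s (C n) (d n)) \<and>
     (\<forall>n. d n ` C n \<subseteq> C (n + 1)) \<and>
     (\<forall>n. \<forall>x\<in>C n. d (n + 1) (d n x) = 0)"

definition filtered_complex ::
  "('k::field \<Rightarrow> 'a::ab_group_add \<Rightarrow> 'a) \<Rightarrow> (int \<Rightarrow> 'a set) \<Rightarrow> (int \<Rightarrow> 'a \<Rightarrow> 'a)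
     \<Rightarrow> (int \<Rightarrow> int \<Rightarrow> 'a set) \<Rightarrow> bool" where
  "filtered_complex s C d F \<longleftrightarrow>
     cochain_complex s C d \<and>
     (\<forall>p n. subsp s (F p n) \<and> F p n \<subseteq> C n) \<and>
     (\<forall>p n. F (p + 1) n \<subseteq> F p n) \<and>
     (\<forall>p n. d n ` F p n \<subseteq> F p (n + 1)) \<and>
     (\<forall>n. (\<Union>p. F p n) = C n) \<and>
     (\<forall>n. \<exists>p. F p n = {0})"

definition filtered_morphism ::
  "('k::field \<Rightarrow> 'a::ab_group_add \<Rightarrow> 'a) \<Rightarrow> (int \<Rightarrow> 'a set) \<Rightarrow> (int \<Rightarrow> 'a \<Rightarrow> 'a) \<Rightarrow> (int \<Rightarrow> int \<Rightarrow> 'a set)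
     \<Rightarrow> (int \<Rightarrow> 'a set) \<Rightarrow> (int \<Rightarrow> 'a \<Rightarrow> 'a) \<Rightarrow> (int \<Rightarrow> int \<Rightarrow> 'a set)
     \<Rightarrow> (int \<Rightarrow> 'a \<Rightarrow> 'a) \<Rightarrow> bool" where
  "filtered_morphism s C d F C' d' F' f \<longleftrightarrow>
     (\<forall>n. lin_on s (C n) (f n)) \<and>
     (\<forall>n. f n ` C n \<subseteq> C' n) \<and>
     (\<forall>n. \<forall>x\<in>C n. f (n + 1) (d n x) = d' n (f n x)) \<and>
     (\<forall>p n. f n ` F p n \<subseteq> F' p n)"

text \<open>The map induced by f on H^n of the subcomplexes F^p is bijective (written out on
  cocycles modulo coboundaries, without forming quotients).\<close>
definition quasi_iso_on ::
  "(int \<Rightarrow> 'a::ab_group_add set) \<Rightarrow> (int \<Rightarrow> 'a \<Rightarrow> 'a) \<Rightarrow> (int \<Rightarrow> 'a set) \<Rightarrow> (int \<Rightarrow> 'a \<Rightarrow> 'a)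
     \<Rightarrow> (int \<Rightarrow> 'a \<Rightarrow> 'a) \<Rightarrow> bool" where
  "quasi_iso_on C d C' d' f \<longleftrightarrow>
     (\<forall>n. \<forall>y\<in>C' n. d' n y = 0 \<longrightarrow>
         (\<exists>x\<in>C n. d n x = 0 \<and> y - f n x \<in> d' (n - 1) ` C' (n - 1))) \<and>
     (\<forall>n. \<forall>x\<in>C n. d n x = 0 \<and> f n x \<in> d' (n - 1) ` C' (n - 1) \<longrightarrow>
         x \<in> d (n - 1) ` C (n - 1))"

definition filtered_quasi_iso ::
  "(int \<Rightarrow> 'a::ab_group_add \<Rightarrow> 'a) \<Rightarrow> (int \<Rightarrow> int \<Rightarrow> 'a set)
     \<Rightarrow> (int \<Rightarrow> 'a \<Rightarrow> 'a) \<Rightarrow> (int \<Rightarrow> int \<Rightarrow> 'a set) \<Rightarrow> (int \<Rightarrow> 'a \<Rightarrow> 'a) \<Rightarrow> bool" where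
  "filtered_quasi_iso d F d' F' f \<longleftrightarrow> (\<forall>p. quasi_iso_on (F p) d (F' p) d' f)"

definition filtered_homotopy ::
  "('k::field \<Rightarrow> 'a::ab_group_add \<Rightarrow> 'a) \<Rightarrow> (int \<Rightarrow> 'a set) \<Rightarrow> (int \<Rightarrow> 'a \<Rightarrow> 'a) \<Rightarrow> (int \<Rightarrow> int \<Rightarrow> 'a set)
     \<Rightarrow> (int \<Rightarrow> 'a set) \<Rightarrow> (int \<Rightarrow> 'a \<Rightarrow> 'a) \<Rightarrow> (int \<Rightarrow> int \<Rightarrow> 'a set)
     \<Rightarrow> (int \<Rightarrow> 'a \<Rightarrow> 'a) \<Rightarrow> (int \<Rightarrow> 'a \<Rightarrow> 'a) \<Rightarrow> (int \<Rightarrow> 'a \<Rightarrow> 'a) \<Rightarrow> bool" where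
  "filtered_homotopy s C d F C' d' F' h f g \<longleftrightarrow>
     (\<forall>n. lin_on s (C n) (h n)) \<and>
     (\<forall>p n. h n ` F p n \<subseteq> F' p (n - 1)) \<and>
     (\<forall>n. \<forall>x\<in>C n. h (n + 1) (d n x) + d' (n - 1) (h n x) = f n x - g n x)"

text \<open>E_1 page.  E_1^{q,n-q}(A) = H^n(Gr^q A) = Z1 q n / B1 q n, elements are cosets.\<close>
definition Z1 :: "(int \<Rightarrow> 'a::ab_group_add \<Rightarrow> 'a) \<Rightarrow> (int \<Rightarrow> int \<Rightarrow> 'a set) \<Rightarrow> int \<Rightarrow> int \<Rightarrow> 'a set" where
  "Z1 d F q n = {x \<in> F q n. d n x \<in> F (q + 1) (n + 1)}"

definition B1 :: "(int \<Rightarrow> 'a::ab_group_add \<Rightarrow> 'a) \<Rightarrow> (int \<Rightarrow> int \<Rightarrow> 'a set) \<Rightarrow> int \<Rightarrow> int \<Rightarrow> 'a set" where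
  "B1 d F q n = {y + d (n - 1) z | y z. y \<in> F (q + 1) n \<and> z \<in> F q (n - 1)}"

definition coset :: "'a set \<Rightarrow> 'a::ab_group_add \<Rightarrow> 'a set" where
  "coset B x = {x + b | b. b \<in> B}"

text \<open>E1 d F q (n - q) is the set of cosets forming E_1^{q,n-q}.\<close>
definition E1 :: "(int \<Rightarrow> 'a::ab_group_add \<Rightarrow> 'a) \<Rightarrow> (int \<Rightarrow> int \<Rightarrow> 'a set) \<Rightarrow> int \<Rightarrow> int \<Rightarrow> 'a set set" where
  "E1 d F q r = coset (B1 d F q (q + r)) ` Z1 d F q (q + r)"

text \<open>Direct sum of E_1^{q,n-q} over q >= p: finitely supported families of cosets
  (components with q < p are fixed to the zero coset).\<close>
definition E1_sum :: "(int \<Rightarrow> 'a::ab_group_add \<Rightarrow> 'a) \<Rightarrow> (int \<Rightarrow> int \<Rightarrow> 'a set) \<Rightarrow> int \<Rightarrow> int \<Rightarrow> (int \<Rightarrow> 'a set) set" where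
  "E1_sum d F p n = {\<phi>. (\<forall>q. p \<le> q \<longrightarrow> \<phi> q \<in> E1 d F q (n - q)) \<and>
                        (\<forall>q. q < p \<longrightarrow> \<phi> q = B1 d F q n) \<and>
                        finite {q. \<phi> q \<noteq> B1 d F q n}}"

definition E1_add :: "(int \<Rightarrow> 'a::ab_group_add set) \<Rightarrow> (int \<Rightarrow> 'a set) \<Rightarrow> int \<Rightarrow> 'a set" where
  "E1_add \<phi> \<psi> q = {a + b | a b. a \<in> \<phi> q \<and> b \<in> \<psi> q}"

definition E1_scale :: "('k::field \<Rightarrow> 'a::ab_group_add \<Rightarrow> 'a) \<Rightarrow> (int \<Rightarrow> 'a \<Rightarrow> 'a) \<Rightarrow> (int \<Rightarrow> int \<Rightarrow> 'a set)
     \<Rightarrow> int \<Rightarrow> 'k \<Rightarrow> (int \<Rightarrow> 'a set) \<Rightarrow> int \<Rightarrow> 'a set" where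
  "E1_scale s d F n c \<phi> q = {s c a + b | a b. a \<in> \<phi> q \<and> b \<in> B1 d F q n}"

definition iso_E1_sum :: "('k::field \<Rightarrow> 'a::ab_group_add \<Rightarrow> 'a) \<Rightarrow> 'a set
     \<Rightarrow> (int \<Rightarrow> 'a \<Rightarrow> 'a) \<Rightarrow> (int \<Rightarrow> int \<Rightarrow> 'a set) \<Rightarrow> int \<Rightarrow> int \<Rightarrow> bool" where
  "iso_E1_sum s V d F p n \<longleftrightarrow>
     (\<exists>\<Phi>. bij_betw \<Phi> V (E1_sum d F p n) \<and>
          (\<forall>x\<in>V. \<forall>y\<in>V. \<Phi> (x + y) = E1_add (\<Phi> x) (\<Phi> y)) \<and>
          (\<forall>c. \<forall>x\<in>V. \<Phi> (s c x) = E1_scale s d F n c (\<Phi> x)))"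

end

(*
  Choose complements in every bidegree: C_q of Z_1 in F^q, H_q of B_1 in Z_1, and let D_q be
  the image under d of C_q in the degree below.  Then C_q + H_q + D_q is a direct complement of
  F^(q+1) in F^q, so A = C + H + D as a direct sum of filtered pieces; d maps C isomorphically
  and strictly onto D, and H /\ F^p represents the sum of the E_1^q for q >= p.

  The map h = d^(-1) o pi_D is a filtered homotopy for which rho = dh + hd is idempotent, hence
  1 - rho retracts A onto the filtered subcomplex M = ker rho, with h a homotopy from the
  identity to the composite A -> M -> A.  Projection to H identifies F^p M with the sum of the
  E_1^q, q >= p.  Finally d raises the filtration on M: for x = c + h in F^p M, d h lies in
  F^(p+1) because H_q lies in Z_1, and d c = - pi_D (d h) because the D-part of dx vanishes.
*)
theory Submission
  imports Defs
begin

section \<open>Linear algebra\<close>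

lemma antimono_int_family:
  fixes G :: "int \<Rightarrow> 'a set"
  assumes "\<And>q. G (q + 1) \<subseteq> G q" and "p \<le> q"
  shows "G q \<subseteq> G p"
  using assms(2)
proof (induction q rule: int_ge_induct)
  case (step q)
  then show ?case using assms(1)[of q] by blast
qed simp

lemma mem_coset_iff: "x \<in> coset B a \<longleftrightarrow> x - a \<in> B"
  by (force simp: coset_def)

context vector_space
begin

lemma subsp_iff_subspace: "subsp scale S \<longleftrightarrow> subspace S"
  by (simp add: subsp_def subspace_def)

lemma lin_on_subset: "lin_on scale V f \<Longrightarrow> U \<subseteq> V \<Longrightarrow> lin_on scale U f"
  unfolding lin_on_def by blast

lemma lin_on_0:
  assumes "subspace V" "lin_on scale V f"
  shows "f 0 = 0"
proof -
  have "f (0 + 0) = f 0 + f 0"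
    using assms subspace_0 unfolding lin_on_def by blast
  then show ?thesis by simp
qed

lemma lin_on_diff:
  assumes "subspace V" "lin_on scale V f" "x \<in> V" "y \<in> V"
  shows "f (x - y) = f x - f y"
proof -
  have "f x = f ((x - y) + y)" by simp
  also have "\<dots> = f (x - y) + f y"
    using assms subspace_diff unfolding lin_on_def by blast
  finally show ?thesis by (simp add: algebra_simps)
qed

lemma lin_on_sum:
  assumes "subspace V" "lin_on scale V f" "\<And>i. i \<in> S \<Longrightarrow> \<phi> i \<in> V"
  shows "f (sum \<phi> S) = (\<Sum>i\<in>S. f (\<phi> i))"
  using assms(3)
proof (induction S rule: infinite_finite_induct)
  case (insert i S)
  then have "sum \<phi> S \<in> V" using subspace_sum[OF assms(1)] by blast
  then show ?case using insert assms(2) unfolding lin_on_def by simp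
qed (use lin_on_0[OF assms(1,2)] in simp_all)

lemma subspace_image_lin_on:
  assumes "subspace V" "lin_on scale V f"
  shows "subspace (f ` V)"
proof (rule subspaceI)
  show "0 \<in> f ` V" using lin_on_0[OF assms] subspace_0[OF assms(1)] by force
  show "x + y \<in> f ` V" if "x \<in> f ` V" "y \<in> f ` V" for x y
    using that assms subspace_add unfolding lin_on_def by (smt (verit) image_iff)
  show "scale c x \<in> f ` V" if "x \<in> f ` V" for c x
    using that assms subspace_scale unfolding lin_on_def by (smt (verit) image_iff)
qed

definition complement_in :: "'b set \<Rightarrow> 'b set \<Rightarrow> 'b set \<Rightarrow> bool" where
  "complement_in W U V \<longleftrightarrow> subspace W \<and> W \<subseteq> V \<and> (\<forall>x\<in>W. x \<in> U \<longrightarrow> x = 0) \<and>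
     (\<forall>v\<in>V. \<exists>w\<in>W. \<exists>u\<in>U. v = w + u)"

lemma span_disjoint_inter_eq_0:
  assumes B: "independent B" and "S \<subseteq> B" "T \<subseteq> B" "S \<inter> T = {}"
    and x: "x \<in> span S" "x \<in> span T"
  shows "x = 0"
proof -
  have "representation B x = representation S x" "representation B x = representation T x"
    using representation_extend[OF B] assms by blast+
  then have "representation B x b = 0" for b
    using representation_ne_zero \<open>S \<inter> T = {}\<close> by (metis disjoint_iff)
  moreover have "x = (\<Sum>b | representation B x b \<noteq> 0. representation B x b *s b)"
    using sum_nonzero_representation_eq[OF B] span_mono[OF \<open>S \<subseteq> B\<close>] x by auto
  ultimately show ?thesis by simp
qed

lemma complement_in_exists:
  assumes U: "subspace U" and V: "subspace V" and "U \<subseteq> V"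
  shows "\<exists>W. complement_in W U V"
proof -
  obtain BU where BU: "BU \<subseteq> U" "independent BU" "U \<subseteq> span BU"
    by (rule maximal_independent_subset)
  obtain B where B: "BU \<subseteq> B" "B \<subseteq> V" "independent B" "V \<subseteq> span B"
    using maximal_independent_subset_extend[of BU V] BU \<open>U \<subseteq> V\<close> by blast
  have span_BU: "span BU = U" using BU U span_subspace by blast
  have "complement_in (span (B - BU)) U V"
    unfolding complement_in_def
  proof (intro conjI ballI impI)
    show "span (B - BU) \<subseteq> V" using B V span_minimal by blast
    show "x = 0" if "x \<in> span (B - BU)" "x \<in> U" for x
      using span_disjoint_inter_eq_0[OF B(3), of "B - BU" BU] that B span_BU by blast
    show "\<exists>w\<in>span (B - BU). \<exists>u\<in>U. v = w + u" if "v \<in> V" for v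
    proof -
      have "v \<in> span ((B - BU) \<union> BU)" using B that by (metis Un_Diff_cancel2 sup.absorb1 subsetD)
      then show ?thesis unfolding span_Un span_BU by blast
    qed
  qed simp
  then show ?thesis ..
qed

lemma coset_eq_iff:
  assumes "subspace B"
  shows "coset B a = coset B b \<longleftrightarrow> a - b \<in> B"
proof
  assume eq: "coset B a = coset B b"
  have "a \<in> coset B a" using subspace_0[OF assms] by (simp add: mem_coset_iff)
  then show "a - b \<in> B" by (simp add: eq mem_coset_iff)
next
  assume ab: "a - b \<in> B"
  have "x - a \<in> B \<longleftrightarrow> x - b \<in> B" for x
    using subspace_add[OF assms _ ab, of "x - a"] subspace_diff[OF assms _ ab, of "x - b"] by auto
  then show "coset B a = coset B b" by (auto simp: mem_coset_iff)
qed

lemma coset_0: "subspace B \<Longrightarrow> coset B 0 = B"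
  by (auto simp: mem_coset_iff)

lemma coset_add:
  assumes "subspace B"
  shows "{x + y | x y. x \<in> coset B a \<and> y \<in> coset B b} = coset B (a + b)"
proof (intro set_eqI iffI)
  fix z assume "z \<in> {x + y | x y. x \<in> coset B a \<and> y \<in> coset B b}"
  then obtain x y where xy: "x - a \<in> B" "y - b \<in> B" "z = x + y" by (auto simp: mem_coset_iff)
  have "z - (a + b) = (x - a) + (y - b)" using xy(3) by simp
  with subspace_add[OF assms xy(1,2)] show "z \<in> coset B (a + b)" by (metis mem_coset_iff)
next
  fix z assume "z \<in> coset B (a + b)"
  then have "z - b \<in> coset B a" "b \<in> coset B b"
    using subspace_0[OF assms] by (simp_all add: mem_coset_iff algebra_simps)
  then show "z \<in> {x + y | x y. x \<in> coset B a \<and> y \<in> coset B b}" by force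
qed

lemma coset_scale:
  assumes "subspace B"
  shows "{scale c x + y | x y. x \<in> coset B a \<and> y \<in> B} = coset B (scale c a)"
proof (intro set_eqI iffI)
  fix z assume "z \<in> {scale c x + y | x y. x \<in> coset B a \<and> y \<in> B}"
  then obtain x y where xy: "x - a \<in> B" "y \<in> B" "z = scale c x + y" by (auto simp: mem_coset_iff)
  have "z - scale c a = scale c (x - a) + y" using xy(3) by (simp add: scale_right_diff_distrib)
  with subspace_add[OF assms subspace_scale[OF assms xy(1)] xy(2)]
  show "z \<in> coset B (scale c a)" by (simp add: mem_coset_iff)
next
  fix z assume "z \<in> coset B (scale c a)"
  then have "z = scale c a + (z - scale c a)" "a \<in> coset B a" "z - scale c a \<in> B"
    using subspace_0[OF assms] by (simp_all add: mem_coset_iff)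
  then show "z \<in> {scale c x + y | x y. x \<in> coset B a \<and> y \<in> B}" by blast
qed

end

section \<open>Splitting a bounded filtration\<close>

text \<open>The finitely supported family of \<open>W\<close>-components summing to \<open>v\<close>; it is unique under the
  assumptions of \<open>filtration_splitting\<close>, and arbitrary when no such family exists.\<close>
definition split_comp :: "(int \<Rightarrow> 'a::ab_group_add set) \<Rightarrow> 'a \<Rightarrow> int \<Rightarrow> 'a" where
  "split_comp W v =
     (SOME \<phi>. (\<forall>q. \<phi> q \<in> W q) \<and> finite {q. \<phi> q \<noteq> 0} \<and> v = sum \<phi> {q. \<phi> q \<noteq> 0})"

locale filtration_splitting = vector_space s
  for s :: "'k::field \<Rightarrow> 'a::ab_group_add \<Rightarrow> 'a" +
  fixes G W :: "int \<Rightarrow> 'a set" and P :: int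
  assumes subspace_G: "subspace (G q)"
    and G_Suc_subset: "G (q + 1) \<subseteq> G q"
    and G_bound: "G P = {0}"
    and W_complement: "complement_in (W q) (G (q + 1)) (G q)"
begin

lemma subspace_W: "subspace (W q)"
  and W_subset_G: "W q \<subseteq> G q"
  and W_inter_G_Suc: "x \<in> W q \<Longrightarrow> x \<in> G (q + 1) \<Longrightarrow> x = 0"
  and G_split: "a \<in> G q \<Longrightarrow> \<exists>w\<in>W q. \<exists>y\<in>G (q + 1). a = w + y"
  using W_complement[of q] unfolding complement_in_def by blast+

lemma G_antimono: "p \<le> q \<Longrightarrow> G q \<subseteq> G p"
  by (rule antimono_int_family[where G = G]) (rule G_Suc_subset)

lemma G_eq_0: "P \<le> q \<Longrightarrow> G q = {0}"
  using G_antimono[of P q] G_bound subspace_0[OF subspace_G] by blast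

lemma sum_W_in_G:
  assumes "\<And>q. q \<in> S \<Longrightarrow> \<phi> q \<in> W q \<and> p \<le> q"
  shows "sum \<phi> S \<in> G p"
  by (rule subspace_sum[OF subspace_G]) (use assms W_subset_G G_antimono in blast)

lemma G_eq_sum_W:
  assumes "v \<in> G p"
  shows "\<exists>\<phi>. (\<forall>q. \<phi> q \<in> W q) \<and> (\<forall>q. \<phi> q \<noteq> 0 \<longrightarrow> p \<le> q \<and> q < P) \<and> v = sum \<phi> {p..<P}"
proof (cases "p \<le> P")
  case False
  then have "v = 0" using G_eq_0[of p] assms by auto
  then show ?thesis by (intro exI[of _ "\<lambda>_. 0"]) (auto simp: subspace_0[OF subspace_W])
next
  case True
  then show ?thesis using assms
  proof (induction p arbitrary: v rule: int_le_induct)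
    case base
    then show ?case using G_bound by (intro exI[of _ "\<lambda>_. 0"]) (auto simp: subspace_0[OF subspace_W])
  next
    case (step p)
    obtain w y where wy: "w \<in> W (p - 1)" "y \<in> G p" "v = w + y"
      using G_split[of v "p - 1"] step.prems by auto
    obtain \<phi> where \<phi>: "\<forall>q. \<phi> q \<in> W q" "\<forall>q. \<phi> q \<noteq> 0 \<longrightarrow> p \<le> q \<and> q < P" "y = sum \<phi> {p..<P}"
      using step.IH[OF wy(2)] by blast
    define \<psi> where "\<psi> = \<phi>(p - 1 := w)"
    have "{p - 1..<P} = insert (p - 1) {p..<P}" using step.hyps by auto
    moreover have "sum \<psi> {p..<P} = sum \<phi> {p..<P}" by (rule sum.cong) (simp_all add: \<psi>_def)
    ultimately have "v = sum \<psi> {p - 1..<P}" using \<phi>(3) wy(3) by (simp add: \<psi>_def)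
    moreover have "\<forall>q. \<psi> q \<in> W q" using \<phi>(1) wy(1) by (simp add: \<psi>_def)
    moreover have "\<forall>q. \<psi> q \<noteq> 0 \<longrightarrow> p - 1 \<le> q \<and> q < P" using \<phi>(2) step.hyps by (auto simp: \<psi>_def)
    ultimately show ?case by blast
  qed
qed

text \<open>The lowest nonzero component of a vanishing sum would lie in the next filtration step.\<close>
lemma sum_W_eq_0D:
  assumes W: "\<And>q. \<chi> q \<in> W q" and S: "finite S" "sum \<chi> S = 0" "q \<in> S"
  shows "\<chi> q = 0"
proof (rule ccontr)
  assume "\<chi> q \<noteq> 0"
  define T where "T = {q\<in>S. \<chi> q \<noteq> 0}"
  have T: "finite T" "T \<noteq> {}" using S \<open>\<chi> q \<noteq> 0\<close> by (auto simp: T_def)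
  define q0 where "q0 = Min T"
  have q0: "q0 \<in> T" "\<And>r. r \<in> T \<Longrightarrow> q0 \<le> r" using T by (simp_all add: q0_def)
  have "sum \<chi> S = sum \<chi> T" by (rule sum.mono_neutral_right) (auto simp: T_def S)
  also have "\<dots> = \<chi> q0 + sum \<chi> (T - {q0})" using T q0 by (simp add: sum.remove)
  finally have "\<chi> q0 = - sum \<chi> (T - {q0})" using S by (simp add: eq_neg_iff_add_eq_0)
  moreover have "sum \<chi> (T - {q0}) \<in> G (q0 + 1)"
    by (rule sum_W_in_G) (use W q0(2) in force)
  ultimately have "\<chi> q0 \<in> G (q0 + 1)" using subspace_neg[OF subspace_G] by simp
  then show False using W_inter_G_Suc[OF W] q0(1) unfolding T_def by blast
qed

lemma split_comp:
  assumes "v \<in> G p"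
  shows "\<forall>q. split_comp W v q \<in> W q"
    and "finite {q. split_comp W v q \<noteq> 0}"
    and "v = sum (split_comp W v) {q. split_comp W v q \<noteq> 0}"
proof -
  obtain \<phi> where \<phi>: "\<forall>q. \<phi> q \<in> W q" "\<forall>q. \<phi> q \<noteq> 0 \<longrightarrow> p \<le> q \<and> q < P" "v = sum \<phi> {p..<P}"
    using G_eq_sum_W[OF assms] by blast
  have "finite {q. \<phi> q \<noteq> 0}" by (rule finite_subset[of _ "{p..<P}"]) (use \<phi> in auto)
  moreover have "sum \<phi> {p..<P} = sum \<phi> {q. \<phi> q \<noteq> 0}"
    by (rule sum.mono_neutral_right) (use \<phi> in auto)
  ultimately have "\<exists>\<phi>. (\<forall>q. \<phi> q \<in> W q) \<and> finite {q. \<phi> q \<noteq> 0} \<and> v = sum \<phi> {q. \<phi> q \<noteq> 0}"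
    using \<phi> by auto
  then have "(\<forall>q. split_comp W v q \<in> W q) \<and> finite {q. split_comp W v q \<noteq> 0} \<and>
      v = sum (split_comp W v) {q. split_comp W v q \<noteq> 0}"
    unfolding split_comp_def by (rule someI_ex)
  then show "\<forall>q. split_comp W v q \<in> W q" "finite {q. split_comp W v q \<noteq> 0}"
      "v = sum (split_comp W v) {q. split_comp W v q \<noteq> 0}"
    by blast+
qed

lemma sum_split_comp:
  assumes "v \<in> G p" "finite S" "\<And>q. split_comp W v q \<noteq> 0 \<Longrightarrow> q \<in> S"
  shows "sum (split_comp W v) S = v"
proof -
  have "sum (split_comp W v) {q. split_comp W v q \<noteq> 0} = sum (split_comp W v) S"
    by (rule sum.mono_neutral_left) (use assms in auto)
  then show ?thesis using split_comp(3)[OF assms(1)] by simp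
qed

lemma split_comp_sum:
  assumes W: "\<And>q. \<phi> q \<in> W q" and S: "finite S" and supp: "\<And>q. \<phi> q \<noteq> 0 \<Longrightarrow> q \<in> S"
  shows "split_comp W (sum \<phi> S) = \<phi>"
proof -
  let ?v = "sum \<phi> S"
  have "?v \<in> G (Min (insert 0 S))" by (rule sum_W_in_G) (use W S in simp)
  note comp = split_comp[OF this]
  define U where "U = S \<union> {q. split_comp W ?v q \<noteq> 0}"
  have U: "finite U" using S comp(2) by (simp add: U_def)
  have "sum (split_comp W ?v) U = ?v"
    using sum_split_comp[OF \<open>?v \<in> _\<close> U] by (simp add: U_def)
  moreover have "sum \<phi> U = ?v"
    by (rule sum.mono_neutral_right) (use U supp in \<open>auto simp: U_def\<close>)
  ultimately have sum_diff: "sum (\<lambda>q. split_comp W ?v q - \<phi> q) U = 0" by (simp add: sum_subtractf)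
  have "split_comp W ?v q - \<phi> q \<in> W q" for q
    using comp(1) W subspace_diff[OF subspace_W] by blast
  then have "split_comp W ?v q - \<phi> q = 0" if "q \<in> U" for q
    using sum_W_eq_0D[OF _ U sum_diff that] by blast
  moreover have "split_comp W ?v q = 0 \<and> \<phi> q = 0" if "q \<notin> U" for q
    using that supp by (auto simp: U_def)
  ultimately show ?thesis
    by (intro ext) (metis eq_iff_diff_eq_0)
qed

lemma split_comp_below:
  assumes "v \<in> G p" "q < p"
  shows "split_comp W v q = 0"
proof -
  obtain \<phi> where \<phi>: "\<forall>q. \<phi> q \<in> W q" "\<forall>q. \<phi> q \<noteq> 0 \<longrightarrow> p \<le> q \<and> q < P" "v = sum \<phi> {p..<P}"
    using G_eq_sum_W[OF assms(1)] by blast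
  have "split_comp W v = \<phi>" unfolding \<phi>(3) by (rule split_comp_sum) (use \<phi> in auto)
  then show ?thesis using \<phi> assms by force
qed

lemma in_G_if_split_comp_below:
  assumes "v \<in> G r" "\<And>q. q < p \<Longrightarrow> split_comp W v q = 0"
  shows "v \<in> G p"
proof -
  have "sum (split_comp W v) {q. split_comp W v q \<noteq> 0} \<in> G p"
    by (rule sum_W_in_G) (use split_comp(1)[OF assms(1)] assms(2) not_less in blast)
  then show ?thesis using split_comp(3)[OF assms(1)] by simp
qed

lemma split_comp_add:
  assumes "v \<in> G p" "w \<in> G r"
  shows "split_comp W (v + w) = (\<lambda>q. split_comp W v q + split_comp W w q)"
proof -
  define S where "S = {q. split_comp W v q \<noteq> 0} \<union> {q. split_comp W w q \<noteq> 0}"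
  have S: "finite S" using split_comp(2)[OF assms(1)] split_comp(2)[OF assms(2)] by (simp add: S_def)
  have "v + w = sum (\<lambda>q. split_comp W v q + split_comp W w q) S"
    using sum_split_comp[OF assms(1) S] sum_split_comp[OF assms(2) S] by (simp add: S_def sum.distrib)
  also have "split_comp W \<dots> = (\<lambda>q. split_comp W v q + split_comp W w q)"
    by (rule split_comp_sum[OF _ S])
      (use split_comp(1)[OF assms(1)] split_comp(1)[OF assms(2)] subspace_add[OF subspace_W]
        in \<open>auto simp: S_def\<close>)
  finally show ?thesis .
qed

lemma split_comp_scale:
  assumes "v \<in> G p"
  shows "split_comp W (s c v) = (\<lambda>q. s c (split_comp W v q))"
proof -
  define S where "S = {q. split_comp W v q \<noteq> 0}"
  have S: "finite S" using split_comp(2)[OF assms] by (simp add: S_def)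
  have "s c v = sum (\<lambda>q. s c (split_comp W v q)) S"
    using sum_split_comp[OF assms S] by (simp add: S_def scale_sum_right[symmetric])
  also have "split_comp W \<dots> = (\<lambda>q. s c (split_comp W v q))"
    by (rule split_comp_sum[OF _ S]) (use split_comp(1)[OF assms] subspace_scale[OF subspace_W] in \<open>auto simp: S_def\<close>)
  finally show ?thesis .
qed

lemma split_comp_eq_0_iff:
  assumes "v \<in> G p"
  shows "split_comp W v = (\<lambda>_. 0) \<longleftrightarrow> v = 0"
proof
  assume "split_comp W v = (\<lambda>_. 0)"
  then show "v = 0" using split_comp(3)[OF assms] by simp
next
  have "split_comp W 0 = (\<lambda>_. 0)"
    using split_comp_sum[of "\<lambda>_. 0" "{}"] subspace_0[OF subspace_W] by simp
  then show "v = 0 \<Longrightarrow> split_comp W v = (\<lambda>_. 0)" by simp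
qed

end

section \<open>Filtered complexes\<close>

locale filtered_cx = vector_space s
  for s :: "'k::field \<Rightarrow> 'a::ab_group_add \<Rightarrow> 'a" +
  fixes A :: "int \<Rightarrow> 'a set" and d :: "int \<Rightarrow> 'a \<Rightarrow> 'a" and F :: "int \<Rightarrow> int \<Rightarrow> 'a set"
  assumes filtered: "filtered_complex s A d F"
begin

lemma cochain: "cochain_complex s A d"
  and subsp_F: "subsp s (F p n)"
  and F_subset_A: "F p n \<subseteq> A n"
  and F_Suc_subset: "F (p + 1) n \<subseteq> F p n"
  and d_F_subset: "d n ` F p n \<subseteq> F p (n + 1)"
  and Union_F: "(\<Union>p. F p n) = A n"
  and F_bounded: "\<exists>p. F p n = {0}"
  using filtered unfolding filtered_complex_def by simp_all

lemma subspace_A: "subspace (A n)"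
  and d_lin: "lin_on s (A n) (d n)"
  and d_A_subset: "d n ` A n \<subseteq> A (n + 1)"
  and dd: "x \<in> A n \<Longrightarrow> d (n + 1) (d n x) = 0"
  using cochain unfolding cochain_complex_def subsp_iff_subspace by simp_all

lemma subspace_F: "subspace (F p n)"
  using subsp_F by (simp add: subsp_iff_subspace)

lemma d_A: "x \<in> A n \<Longrightarrow> d n x \<in> A (n + 1)"
  using d_A_subset by blast

lemma d_F: "x \<in> F p n \<Longrightarrow> d n x \<in> F p (n + 1)"
  using d_F_subset by blast

lemma F_A: "x \<in> F p n \<Longrightarrow> x \<in> A n"
  using F_subset_A by blast

lemma A_F: "x \<in> A n \<Longrightarrow> \<exists>p. x \<in> F p n"
  using Union_F by blast

lemma F_antimono: "p \<le> q \<Longrightarrow> F q n \<subseteq> F p n"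
  by (rule antimono_int_family[where G = "\<lambda>p. F p n"]) (rule F_Suc_subset)

lemma d_add: "x \<in> A n \<Longrightarrow> y \<in> A n \<Longrightarrow> d n (x + y) = d n x + d n y"
  and d_scale: "x \<in> A n \<Longrightarrow> d n (s c x) = s c (d n x)"
  using d_lin unfolding lin_on_def by blast+

lemma d_0: "d n 0 = 0"
  by (rule lin_on_0[OF subspace_A d_lin])

lemma d_diff: "x \<in> A n \<Longrightarrow> y \<in> A n \<Longrightarrow> d n (x - y) = d n x - d n y"
  by (rule lin_on_diff[OF subspace_A d_lin])

lemma d_sum: "(\<And>i. i \<in> S \<Longrightarrow> x i \<in> A n) \<Longrightarrow> d n (sum x S) = (\<Sum>i\<in>S. d n (x i))"
  by (rule lin_on_sum[OF subspace_A d_lin])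

lemma d_F_pred: "x \<in> F p (n - 1) \<Longrightarrow> d (n - 1) x \<in> F p n"
  using d_F[of x p "n - 1"] by simp

lemma dd_pred: "x \<in> A (n - 1) \<Longrightarrow> d n (d (n - 1) x) = 0"
  using dd[of x "n - 1"] by simp

lemma d_A_pred: "x \<in> A (n - 1) \<Longrightarrow> d (n - 1) x \<in> A n"
  using d_A[of x "n - 1"] by simp

end

section \<open>Retracts defined by an idempotent \<open>dh + hd\<close>\<close>

definition dh_hd :: "(int \<Rightarrow> 'a::ab_group_add \<Rightarrow> 'a) \<Rightarrow> (int \<Rightarrow> 'a \<Rightarrow> 'a) \<Rightarrow> int \<Rightarrow> 'a \<Rightarrow> 'a" where
  "dh_hd d h n x = h (n + 1) (d n x) + d (n - 1) (h n x)"

definition ker_dh_hd ::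
  "(int \<Rightarrow> 'a::ab_group_add set) \<Rightarrow> (int \<Rightarrow> 'a \<Rightarrow> 'a) \<Rightarrow> (int \<Rightarrow> 'a \<Rightarrow> 'a) \<Rightarrow> int \<Rightarrow> 'a set" where
  "ker_dh_hd A d h n = {x \<in> A n. dh_hd d h n x = 0}"

definition ker_dh_hd_filt ::
  "(int \<Rightarrow> 'a::ab_group_add set) \<Rightarrow> (int \<Rightarrow> 'a \<Rightarrow> 'a) \<Rightarrow> (int \<Rightarrow> 'a \<Rightarrow> 'a) \<Rightarrow> (int \<Rightarrow> int \<Rightarrow> 'a set)
     \<Rightarrow> int \<Rightarrow> int \<Rightarrow> 'a set" where
  "ker_dh_hd_filt A d h F p n = ker_dh_hd A d h n \<inter> F p n"

definition id_minus_dh_hd :: "(int \<Rightarrow> 'a::ab_group_add \<Rightarrow> 'a) \<Rightarrow> (int \<Rightarrow> 'a \<Rightarrow> 'a) \<Rightarrow> int \<Rightarrow> 'a \<Rightarrow> 'a" where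
  "id_minus_dh_hd d h n x = x - dh_hd d h n x"

text \<open>For filtered \<open>h\<close>, the chain map \<open>1 - (dh + hd)\<close> is filtered homotopic to the identity via
  \<open>h\<close>; idempotence makes it a projection onto the subcomplex \<open>ker (dh + hd)\<close>.\<close>
locale idempotent_dh_hd = filtered_cx s A d F
  for s :: "'k::field \<Rightarrow> 'a::ab_group_add \<Rightarrow> 'a" and A d F +
  fixes h :: "int \<Rightarrow> 'a \<Rightarrow> 'a"
  assumes h_lin: "lin_on s (A n) (h n)"
    and h_F: "x \<in> F p n \<Longrightarrow> h n x \<in> F p (n - 1)"
    and dh_hd_idem: "x \<in> A n \<Longrightarrow> dh_hd d h n (dh_hd d h n x) = dh_hd d h n x"
begin

lemma h_A: "x \<in> A n \<Longrightarrow> h n x \<in> A (n - 1)"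
  using A_F h_F F_A by blast

lemma h_A_Suc: "x \<in> A (n + 1) \<Longrightarrow> h (n + 1) x \<in> A n"
  using h_A[of x "n + 1"] by simp

lemma h_add: "x \<in> A n \<Longrightarrow> y \<in> A n \<Longrightarrow> h n (x + y) = h n x + h n y"
  and h_scale: "x \<in> A n \<Longrightarrow> h n (s c x) = s c (h n x)"
  using h_lin unfolding lin_on_def by blast+

lemma h_0: "h n 0 = 0"
  by (rule lin_on_0[OF subspace_A h_lin])

lemma dh_hd_A:
  assumes "x \<in> A n"
  shows "dh_hd d h n x \<in> A n"
  unfolding dh_hd_def
  by (rule subspace_add[OF subspace_A h_A_Suc[OF d_A] d_A_pred[OF h_A]]) (rule assms)+

lemma dh_hd_F:
  assumes "x \<in> F p n"
  shows "dh_hd d h n x \<in> F p n"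
proof -
  have "h (n + 1) (d n x) \<in> F p n" using h_F[OF d_F[OF assms]] by simp
  moreover have "d (n - 1) (h n x) \<in> F p n" using d_F_pred[OF h_F[OF assms]] .
  ultimately show ?thesis unfolding dh_hd_def by (rule subspace_add[OF subspace_F])
qed

lemma dh_hd_add: "x \<in> A n \<Longrightarrow> y \<in> A n \<Longrightarrow> dh_hd d h n (x + y) = dh_hd d h n x + dh_hd d h n y"
  unfolding dh_hd_def by (simp add: d_add h_add d_A h_A h_A_Suc d_A_pred)

lemma dh_hd_scale: "x \<in> A n \<Longrightarrow> dh_hd d h n (s c x) = s c (dh_hd d h n x)"
  unfolding dh_hd_def by (simp add: d_scale h_scale d_A h_A scale_right_distrib)

lemma dh_hd_lin: "lin_on s (A n) (dh_hd d h n)"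
  unfolding lin_on_def using dh_hd_add dh_hd_scale by blast

lemma dh_hd_0: "dh_hd d h n 0 = 0"
  by (rule lin_on_0[OF subspace_A dh_hd_lin])

lemma dh_hd_diff: "x \<in> A n \<Longrightarrow> y \<in> A n \<Longrightarrow> dh_hd d h n (x - y) = dh_hd d h n x - dh_hd d h n y"
  by (rule lin_on_diff[OF subspace_A dh_hd_lin])

lemma dh_hd_d:
  assumes "x \<in> A n"
  shows "dh_hd d h (n + 1) (d n x) = d n (dh_hd d h n x)"
proof -
  have "dh_hd d h (n + 1) (d n x) = d n (h (n + 1) (d n x))"
    using dd[OF assms] by (simp add: dh_hd_def h_0)
  also have "\<dots> = d n (dh_hd d h n x)"
    using d_add[OF h_A_Suc[OF d_A[OF assms]] d_A_pred[OF h_A[OF assms]]] dd_pred[OF h_A[OF assms]]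
    by (simp add: dh_hd_def)
  finally show ?thesis .
qed

lemma dh_hd_cocycle: "d n x = 0 \<Longrightarrow> dh_hd d h n x = d (n - 1) (h n x)"
  by (simp add: dh_hd_def h_0)

lemma subspace_ker_dh_hd: "subspace (ker_dh_hd A d h n)"
proof (rule subspaceI)
  show "0 \<in> ker_dh_hd A d h n"
    by (simp add: ker_dh_hd_def dh_hd_0 subspace_0[OF subspace_A])
  show "x + y \<in> ker_dh_hd A d h n" if "x \<in> ker_dh_hd A d h n" "y \<in> ker_dh_hd A d h n" for x y
    using that by (simp add: ker_dh_hd_def dh_hd_add subspace_add[OF subspace_A])
  show "s c x \<in> ker_dh_hd A d h n" if "x \<in> ker_dh_hd A d h n" for c x
    using that by (simp add: ker_dh_hd_def dh_hd_scale subspace_scale[OF subspace_A])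
qed

lemma subspace_ker_dh_hd_filt: "subspace (ker_dh_hd_filt A d h F p n)"
  unfolding ker_dh_hd_filt_def by (rule subspace_inter[OF subspace_ker_dh_hd subspace_F])

lemma ker_dh_hd_A: "x \<in> ker_dh_hd A d h n \<Longrightarrow> x \<in> A n"
  by (simp add: ker_dh_hd_def)

lemma d_ker_dh_hd: "x \<in> ker_dh_hd A d h n \<Longrightarrow> d n x \<in> ker_dh_hd A d h (n + 1)"
  using dh_hd_d d_A by (simp add: ker_dh_hd_def d_0)

lemma id_minus_dh_hd_ker: "x \<in> A n \<Longrightarrow> id_minus_dh_hd d h n x \<in> ker_dh_hd A d h n"
  using dh_hd_diff dh_hd_A dh_hd_idem subspace_diff[OF subspace_A]
  by (simp add: ker_dh_hd_def id_minus_dh_hd_def)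

lemma id_minus_dh_hd_on_ker: "x \<in> ker_dh_hd A d h n \<Longrightarrow> id_minus_dh_hd d h n x = x"
  by (simp add: ker_dh_hd_def id_minus_dh_hd_def)

lemma id_minus_dh_hd_F: "x \<in> F p n \<Longrightarrow> id_minus_dh_hd d h n x \<in> ker_dh_hd_filt A d h F p n"
  using id_minus_dh_hd_ker F_A dh_hd_F subspace_diff[OF subspace_F]
  by (simp add: ker_dh_hd_filt_def id_minus_dh_hd_def)

lemma id_minus_dh_hd_d: "x \<in> A n \<Longrightarrow> id_minus_dh_hd d h (n + 1) (d n x) = d n (id_minus_dh_hd d h n x)"
  using dh_hd_d d_diff dh_hd_A by (simp add: id_minus_dh_hd_def)

lemma filtered_complex_ker_dh_hd: "filtered_complex s (ker_dh_hd A d h) d (ker_dh_hd_filt A d h F)"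
  unfolding filtered_complex_def cochain_complex_def subsp_iff_subspace
proof (intro conjI allI)
  fix n
  show "lin_on s (ker_dh_hd A d h n) (d n)"
    using lin_on_subset[OF d_lin] ker_dh_hd_A by blast
  show "d n ` ker_dh_hd A d h n \<subseteq> ker_dh_hd A d h (n + 1)"
    using d_ker_dh_hd by blast
  show "\<forall>x\<in>ker_dh_hd A d h n. d (n + 1) (d n x) = 0"
    using dd ker_dh_hd_A by blast
  show "(\<Union>p. ker_dh_hd_filt A d h F p n) = ker_dh_hd A d h n"
    using A_F ker_dh_hd_A by (auto simp: ker_dh_hd_filt_def)
  obtain p where "F p n = {0}" using F_bounded by blast
  then show "\<exists>p. ker_dh_hd_filt A d h F p n = {0}"
    using subspace_0[OF subspace_ker_dh_hd_filt] by (auto simp: ker_dh_hd_filt_def)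
  fix p
  show "ker_dh_hd_filt A d h F p n \<subseteq> ker_dh_hd A d h n"
    by (simp add: ker_dh_hd_filt_def)
  show "ker_dh_hd_filt A d h F (p + 1) n \<subseteq> ker_dh_hd_filt A d h F p n"
    using F_Suc_subset by (auto simp: ker_dh_hd_filt_def)
  show "d n ` ker_dh_hd_filt A d h F p n \<subseteq> ker_dh_hd_filt A d h F p (n + 1)"
    using d_ker_dh_hd d_F by (auto simp: ker_dh_hd_filt_def)
qed (rule subspace_ker_dh_hd subspace_ker_dh_hd_filt)+

lemma filtered_morphism_id_minus_dh_hd:
  "filtered_morphism s A d F (ker_dh_hd A d h) d (ker_dh_hd_filt A d h F) (id_minus_dh_hd d h)"
  unfolding filtered_morphism_def
proof (intro conjI allI)
  fix n
  show "lin_on s (A n) (id_minus_dh_hd d h n)"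
    unfolding lin_on_def id_minus_dh_hd_def
    by (simp add: dh_hd_add dh_hd_scale scale_right_diff_distrib)
  show "id_minus_dh_hd d h n ` A n \<subseteq> ker_dh_hd A d h n"
    using id_minus_dh_hd_ker by blast
  show "\<forall>x\<in>A n. id_minus_dh_hd d h (n + 1) (d n x) = d n (id_minus_dh_hd d h n x)"
    using id_minus_dh_hd_d by blast
  show "id_minus_dh_hd d h n ` F p n \<subseteq> ker_dh_hd_filt A d h F p n" for p
    using id_minus_dh_hd_F by blast
qed

lemma filtered_morphism_ker_dh_hd_incl:
  "filtered_morphism s (ker_dh_hd A d h) d (ker_dh_hd_filt A d h F) A d F (\<lambda>n x. x)"
  unfolding filtered_morphism_def lin_on_def using ker_dh_hd_A by (auto simp: ker_dh_hd_filt_def)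

lemma filtered_homotopy_h: "filtered_homotopy s A d F A d F h (\<lambda>n x. x) (id_minus_dh_hd d h)"
  unfolding filtered_homotopy_def
proof (intro conjI allI ballI)
  show "h n ` F p n \<subseteq> F p (n - 1)" for p n using h_F by blast
qed (simp_all add: h_lin id_minus_dh_hd_def dh_hd_def)

lemma filtered_quasi_iso_id_minus_dh_hd:
  "filtered_quasi_iso d F d (ker_dh_hd_filt A d h F) (id_minus_dh_hd d h)"
  unfolding filtered_quasi_iso_def quasi_iso_on_def
proof (intro allI conjI ballI impI)
  fix p n y assume y: "y \<in> ker_dh_hd_filt A d h F p n" "d n y = 0"
  then have "y \<in> F p n" "y - id_minus_dh_hd d h n y = d (n - 1) 0"
    by (simp_all add: ker_dh_hd_filt_def id_minus_dh_hd_on_ker d_0)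
  then show "\<exists>x\<in>F p n. d n x = 0 \<and>
      y - id_minus_dh_hd d h n x \<in> d (n - 1) ` ker_dh_hd_filt A d h F p (n - 1)"
    using y(2) subspace_0[OF subspace_ker_dh_hd_filt] by blast
next
  fix p n x
  assume x: "x \<in> F p n" "d n x = 0 \<and> id_minus_dh_hd d h n x \<in> d (n - 1) ` ker_dh_hd_filt A d h F p (n - 1)"
  then obtain m where m: "m \<in> ker_dh_hd_filt A d h F p (n - 1)" "id_minus_dh_hd d h n x = d (n - 1) m"
    by blast
  have m_F: "m \<in> F p (n - 1)" using m(1) by (simp add: ker_dh_hd_filt_def)
  have "x = dh_hd d h n x + id_minus_dh_hd d h n x" by (simp add: id_minus_dh_hd_def)
  also have "\<dots> = d (n - 1) (h n x + m)"
    using dh_hd_cocycle x m m_F h_A F_A by (simp add: d_add)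
  finally show "x \<in> d (n - 1) ` F p (n - 1)"
    using h_F[OF x(1)] m_F subspace_add[OF subspace_F] by blast
qed

lemma filtered_quasi_iso_ker_dh_hd_incl: "filtered_quasi_iso d (ker_dh_hd_filt A d h F) d F (\<lambda>n x. x)"
  unfolding filtered_quasi_iso_def quasi_iso_on_def
proof (intro allI conjI ballI impI)
  fix p n y assume y: "y \<in> F p n" "d n y = 0"
  have "id_minus_dh_hd d h n y \<in> ker_dh_hd_filt A d h F p n" using id_minus_dh_hd_F[OF y(1)] .
  moreover have "d n (id_minus_dh_hd d h n y) = 0"
    using id_minus_dh_hd_d[OF F_A[OF y(1)]] y(2) d_0 dh_hd_0 by (simp add: id_minus_dh_hd_def)
  moreover have "y - id_minus_dh_hd d h n y \<in> d (n - 1) ` F p (n - 1)"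
    using dh_hd_cocycle[OF y(2)] h_F[OF y(1)] by (simp add: id_minus_dh_hd_def)
  ultimately show "\<exists>x\<in>ker_dh_hd_filt A d h F p n. d n x = 0 \<and> y - x \<in> d (n - 1) ` F p (n - 1)"
    by blast
next
  fix p n x
  assume x: "x \<in> ker_dh_hd_filt A d h F p n" "d n x = 0 \<and> x \<in> d (n - 1) ` F p (n - 1)"
  then obtain a where a: "a \<in> F p (n - 1)" "x = d (n - 1) a" by blast
  have "x = id_minus_dh_hd d h n x"
    using x(1) by (simp add: ker_dh_hd_filt_def id_minus_dh_hd_on_ker)
  also have "\<dots> = d (n - 1) (id_minus_dh_hd d h (n - 1) a)"
    using id_minus_dh_hd_d[OF F_A[OF a(1)]] a(2) by simp
  finally show "x \<in> d (n - 1) ` ker_dh_hd_filt A d h F p (n - 1)"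
    using id_minus_dh_hd_F[OF a(1)] by blast
qed

end

section \<open>A filtered splitting of a filtered complex\<close>

context filtered_cx
begin

lemma subspace_Z1: "subspace (Z1 d F q n)"
proof (rule subspaceI)
  show "0 \<in> Z1 d F q n" by (simp add: Z1_def d_0 subspace_0[OF subspace_F])
  show "x + y \<in> Z1 d F q n" if "x \<in> Z1 d F q n" "y \<in> Z1 d F q n" for x y
    using that by (auto simp: Z1_def d_add F_A subspace_add[OF subspace_F])
  show "s c x \<in> Z1 d F q n" if "x \<in> Z1 d F q n" for c x
    using that by (auto simp: Z1_def d_scale F_A subspace_scale[OF subspace_F])
qed

lemma Z1_subset_F: "Z1 d F q n \<subseteq> F q n"
  by (auto simp: Z1_def)

lemma F_Suc_subset_Z1: "F (q + 1) n \<subseteq> Z1 d F q n"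
  using F_Suc_subset d_F by (auto simp: Z1_def)

lemma B1_eq: "B1 d F q n = {y + e | y e. y \<in> F (q + 1) n \<and> e \<in> d (n - 1) ` F q (n - 1)}"
  unfolding B1_def by blast

lemma subspace_B1: "subspace (B1 d F q n)"
  unfolding B1_eq
  by (intro subspace_sums subspace_F subspace_image_lin_on lin_on_subset[OF d_lin F_subset_A])

lemma B1_subset_Z1: "B1 d F q n \<subseteq> Z1 d F q n"
proof
  fix b assume "b \<in> B1 d F q n"
  then obtain y z where b: "b = y + d (n - 1) z" "y \<in> F (q + 1) n" "z \<in> F q (n - 1)"
    by (auto simp: B1_def)
  have "b \<in> F q n"
    using b F_Suc_subset d_F_pred subspace_add[OF subspace_F] by blast
  moreover have "d n b = d n y"
    using b dd_pred d_add F_A d_A_pred by simp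
  ultimately show "b \<in> Z1 d F q n" using b(2) d_F by (simp add: Z1_def)
qed

text \<open>At level \<open>q\<close>, \<open>C \<oplus> H \<oplus> D\<close> turns out to be a complement of \<open>F\<^sup>q\<^sup>+\<^sup>1\<close> in \<open>F\<^sup>q\<close>, and \<open>H\<close> is a
  space of representatives of \<open>E\<^sub>1\<^sup>q\<close>.\<close>
definition C_lvl :: "int \<Rightarrow> int \<Rightarrow> 'a set" where
  "C_lvl q n = (SOME W. complement_in W (Z1 d F q n) (F q n))"

definition H_lvl :: "int \<Rightarrow> int \<Rightarrow> 'a set" where
  "H_lvl q n = (SOME W. complement_in W (B1 d F q n) (Z1 d F q n))"

definition D_lvl :: "int \<Rightarrow> int \<Rightarrow> 'a set" where
  "D_lvl q n = d (n - 1) ` C_lvl q (n - 1)"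

definition W_lvl :: "int \<Rightarrow> int \<Rightarrow> 'a set" where
  "W_lvl q n = {c + h + e | c h e. c \<in> C_lvl q n \<and> h \<in> H_lvl q n \<and> e \<in> D_lvl q n}"

lemma C_lvl_complement: "complement_in (C_lvl q n) (Z1 d F q n) (F q n)"
  unfolding C_lvl_def by (rule someI_ex, rule complement_in_exists[OF subspace_Z1 subspace_F Z1_subset_F])

lemma H_lvl_complement: "complement_in (H_lvl q n) (B1 d F q n) (Z1 d F q n)"
  unfolding H_lvl_def by (rule someI_ex, rule complement_in_exists[OF subspace_B1 subspace_Z1 B1_subset_Z1])

lemma subspace_C_lvl: "subspace (C_lvl q n)"
  and C_lvl_subset_F: "C_lvl q n \<subseteq> F q n"
  and C_lvl_inter_Z1: "x \<in> C_lvl q n \<Longrightarrow> x \<in> Z1 d F q n \<Longrightarrow> x = 0"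
  and F_split_C_lvl: "a \<in> F q n \<Longrightarrow> \<exists>c\<in>C_lvl q n. \<exists>z\<in>Z1 d F q n. a = c + z"
  using C_lvl_complement[of q n] unfolding complement_in_def by blast+

lemma subspace_H_lvl: "subspace (H_lvl q n)"
  and H_lvl_subset_Z1: "H_lvl q n \<subseteq> Z1 d F q n"
  and H_lvl_inter_B1: "x \<in> H_lvl q n \<Longrightarrow> x \<in> B1 d F q n \<Longrightarrow> x = 0"
  and Z1_split_H_lvl: "z \<in> Z1 d F q n \<Longrightarrow> \<exists>h\<in>H_lvl q n. \<exists>b\<in>B1 d F q n. z = h + b"
  using H_lvl_complement[of q n] unfolding complement_in_def by blast+

lemma C_lvl_A: "x \<in> C_lvl q n \<Longrightarrow> x \<in> A n"
  using C_lvl_subset_F F_A by blast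

lemma H_lvl_subset_F: "H_lvl q n \<subseteq> F q n"
  using H_lvl_subset_Z1 Z1_subset_F by blast

lemma d_C_lvl_eq_0:
  assumes "c \<in> C_lvl q n" "d n c \<in> F (q + 1) (n + 1)"
  shows "c = 0"
  by (rule C_lvl_inter_Z1[OF assms(1)]) (use assms C_lvl_subset_F in \<open>auto simp: Z1_def\<close>)

lemma subspace_D_lvl: "subspace (D_lvl q n)"
  unfolding D_lvl_def
  by (intro subspace_image_lin_on subspace_C_lvl lin_on_subset[OF d_lin]) (use C_lvl_A in blast)

lemma D_lvl_subset_B1: "D_lvl q n \<subseteq> B1 d F q n"
proof
  fix e assume "e \<in> D_lvl q n"
  then obtain c where c: "c \<in> C_lvl q (n - 1)" "e = 0 + d (n - 1) c" by (auto simp: D_lvl_def)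
  then show "e \<in> B1 d F q n"
    unfolding B1_def using C_lvl_subset_F subspace_0[OF subspace_F] by blast
qed

lemma D_lvl_subset_F: "D_lvl q n \<subseteq> F q n"
  using D_lvl_subset_B1 B1_subset_Z1 Z1_subset_F by blast

lemma B1_split_D_lvl: "b \<in> B1 d F q n \<Longrightarrow> \<exists>y\<in>F (q + 1) n. \<exists>e\<in>D_lvl q n. b = y + e"
proof -
  assume "b \<in> B1 d F q n"
  then obtain y z where b: "b = y + d (n - 1) z" "y \<in> F (q + 1) n" "z \<in> F q (n - 1)"
    by (auto simp: B1_def)
  obtain c u where cu: "c \<in> C_lvl q (n - 1)" "u \<in> Z1 d F q (n - 1)" "z = c + u"
    using F_split_C_lvl[OF b(3)] by blast
  have "d (n - 1) u \<in> F (q + 1) n" using cu(2) by (simp add: Z1_def)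
  then have "y + d (n - 1) u \<in> F (q + 1) n" using b(2) subspace_add[OF subspace_F] by blast
  moreover have "d (n - 1) z = d (n - 1) c + d (n - 1) u"
    using cu d_add C_lvl_A Z1_subset_F F_A by blast
  then have "b = (y + d (n - 1) u) + d (n - 1) c" using b(1) by (simp add: algebra_simps)
  moreover have "d (n - 1) c \<in> D_lvl q n" using cu(1) by (simp add: D_lvl_def)
  ultimately show ?thesis by blast
qed

lemma F_split_W_lvl: "a \<in> F q n \<Longrightarrow> \<exists>w\<in>W_lvl q n. \<exists>y\<in>F (q + 1) n. a = w + y"
proof -
  assume "a \<in> F q n"
  then obtain c z where cz: "c \<in> C_lvl q n" "z \<in> Z1 d F q n" "a = c + z"
    using F_split_C_lvl by blast
  obtain h b where hb: "h \<in> H_lvl q n" "b \<in> B1 d F q n" "z = h + b"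
    using Z1_split_H_lvl[OF cz(2)] by blast
  obtain y e where ye: "y \<in> F (q + 1) n" "e \<in> D_lvl q n" "b = y + e"
    using B1_split_D_lvl[OF hb(2)] by blast
  have "a = (c + h + e) + y" using cz hb ye by (simp add: algebra_simps)
  moreover have "c + h + e \<in> W_lvl q n" using cz hb ye by (auto simp: W_lvl_def)
  ultimately show ?thesis using ye by blast
qed

text \<open>Independence of the pieces is peeled off in the order \<open>C\<close>, \<open>H\<close>, \<open>D\<close>: modulo \<open>Z\<^sub>1\<close> only \<open>c\<close>
  survives, modulo \<open>B\<^sub>1\<close> only \<open>h\<close>, and \<open>e = d c'\<close> lying in \<open>F\<^sup>q\<^sup>+\<^sup>1\<close> forces \<open>c' = 0\<close>.\<close>
lemma lvl_sum_eq_0D: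
  assumes c: "c \<in> C_lvl q n" and h: "h \<in> H_lvl q n" and e: "e \<in> D_lvl q n"
    and y: "y \<in> F (q + 1) n" and sum: "c + h + e + y = 0"
  shows "c = 0 \<and> h = 0 \<and> e = 0"
proof -
  have "h \<in> Z1 d F q n" "e \<in> Z1 d F q n" "y \<in> Z1 d F q n"
    using h e y H_lvl_subset_Z1 D_lvl_subset_B1 B1_subset_Z1 F_Suc_subset_Z1 by blast+
  then have hey: "h + e + y \<in> Z1 d F q n"
    by (intro subspace_add[OF subspace_Z1])
  have "c = - (h + e + y)" using sum by (simp add: eq_neg_iff_add_eq_0 algebra_simps)
  then have c0: "c = 0" using C_lvl_inter_Z1[OF c] subspace_neg[OF subspace_Z1 hey] by simp
  obtain c' where c': "c' \<in> C_lvl q (n - 1)" "e = d (n - 1) c'" using e by (auto simp: D_lvl_def)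
  have "e + y = y + d (n - 1) c'" using c'(2) by (simp add: add.commute)
  then have "e + y \<in> B1 d F q n"
    using y c'(1) C_lvl_subset_F unfolding B1_def by blast
  moreover have "h = - (e + y)" using sum c0 by (simp add: eq_neg_iff_add_eq_0 algebra_simps)
  ultimately have h0: "h = 0" using H_lvl_inter_B1[OF h] subspace_neg[OF subspace_B1] by metis
  have "e = - y" using sum c0 h0 by (simp add: eq_neg_iff_add_eq_0)
  then have "d (n - 1) c' \<in> F (q + 1) (n - 1 + 1)" using c' y subspace_neg[OF subspace_F] by simp
  then have "e = 0" using d_C_lvl_eq_0[OF c'(1)] c'(2) d_0 by simp
  then show ?thesis using c0 h0 by simp
qed

lemma W_lvl_E:
  assumes "w \<in> W_lvl q n"
  obtains c h e where "c \<in> C_lvl q n" "h \<in> H_lvl q n" "e \<in> D_lvl q n" "w = c + h + e"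
  using assms by (auto simp: W_lvl_def)

lemma subspace_W_lvl: "subspace (W_lvl q n)"
proof (rule subspaceI)
  have "(0::'a) = 0 + 0 + 0" by simp
  then show "0 \<in> W_lvl q n" unfolding W_lvl_def
    using subspace_0[OF subspace_C_lvl] subspace_0[OF subspace_H_lvl] subspace_0[OF subspace_D_lvl]
    by blast
next
  fix x y assume "x \<in> W_lvl q n" "y \<in> W_lvl q n"
  then obtain c h e c' h' e' where
    "c \<in> C_lvl q n" "h \<in> H_lvl q n" "e \<in> D_lvl q n" "x = c + h + e"
    "c' \<in> C_lvl q n" "h' \<in> H_lvl q n" "e' \<in> D_lvl q n" "y = c' + h' + e'"
    by (metis W_lvl_E)
  moreover have "x + y = (c + c') + (h + h') + (e + e')"
    using calculation by (simp add: algebra_simps)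
  ultimately show "x + y \<in> W_lvl q n" unfolding W_lvl_def
    using subspace_add[OF subspace_C_lvl] subspace_add[OF subspace_H_lvl] subspace_add[OF subspace_D_lvl]
    by blast
next
  fix r x assume "x \<in> W_lvl q n"
  then obtain c h e where "c \<in> C_lvl q n" "h \<in> H_lvl q n" "e \<in> D_lvl q n" "x = c + h + e"
    by (rule W_lvl_E)
  moreover have "s r x = s r c + s r h + s r e"
    using calculation by (simp add: scale_right_distrib)
  ultimately show "s r x \<in> W_lvl q n" unfolding W_lvl_def
    using subspace_scale[OF subspace_C_lvl] subspace_scale[OF subspace_H_lvl] subspace_scale[OF subspace_D_lvl]
    by blast
qed

lemma W_lvl_subset_F: "W_lvl q n \<subseteq> F q n"
proof
  fix w assume "w \<in> W_lvl q n"
  then obtain c h e where "c \<in> C_lvl q n" "h \<in> H_lvl q n" "e \<in> D_lvl q n" "w = c + h + e"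
    by (rule W_lvl_E)
  moreover have "c \<in> F q n" "h \<in> F q n" "e \<in> F q n"
    using calculation C_lvl_subset_F H_lvl_subset_F D_lvl_subset_F by blast+
  ultimately show "w \<in> F q n" by (simp add: subspace_add[OF subspace_F])
qed

lemma W_lvl_inter_F_Suc:
  assumes "w \<in> W_lvl q n" "w \<in> F (q + 1) n"
  shows "w = 0"
proof -
  obtain c h e where che: "c \<in> C_lvl q n" "h \<in> H_lvl q n" "e \<in> D_lvl q n" "w = c + h + e"
    using assms(1) by (rule W_lvl_E)
  have "c + h + e + - w = 0" using che(4) by simp
  then show ?thesis
    using lvl_sum_eq_0D[OF che(1-3) subspace_neg[OF subspace_F assms(2)]] che(4) by simp
qed

lemma C_lvl_W_lvl: "x \<in> C_lvl q n \<Longrightarrow> x \<in> W_lvl q n"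
  and H_lvl_W_lvl: "x \<in> H_lvl q n \<Longrightarrow> x \<in> W_lvl q n"
  and D_lvl_W_lvl: "x \<in> D_lvl q n \<Longrightarrow> x \<in> W_lvl q n"
proof -
  have "x = x + 0 + 0" "x = 0 + x + 0" "x = 0 + 0 + x" by simp_all
  then show "x \<in> C_lvl q n \<Longrightarrow> x \<in> W_lvl q n" "x \<in> H_lvl q n \<Longrightarrow> x \<in> W_lvl q n"
      "x \<in> D_lvl q n \<Longrightarrow> x \<in> W_lvl q n"
    unfolding W_lvl_def
    using subspace_0[OF subspace_C_lvl] subspace_0[OF subspace_H_lvl] subspace_0[OF subspace_D_lvl]
    by blast+
qed

lemma W_lvl_decomp_unique:
  assumes "c \<in> C_lvl q n" "h \<in> H_lvl q n" "e \<in> D_lvl q n"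
    and "c' \<in> C_lvl q n" "h' \<in> H_lvl q n" "e' \<in> D_lvl q n"
    and "c + h + e = c' + h' + e'"
  shows "c = c' \<and> h = h' \<and> e = e'"
proof -
  have "(c - c') + (h - h') + (e - e') + 0 = 0" using assms(7) by (simp add: algebra_simps)
  then have "c - c' = 0 \<and> h - h' = 0 \<and> e - e' = 0"
    by (rule lvl_sum_eq_0D[OF subspace_diff[OF subspace_C_lvl assms(1,4)]
          subspace_diff[OF subspace_H_lvl assms(2,5)] subspace_diff[OF subspace_D_lvl assms(3,6)]
          subspace_0[OF subspace_F]])
  then show ?thesis by simp
qed

definition F_bound :: "int \<Rightarrow> int" where
  "F_bound n = (SOME p. F p n = {0})"

lemma F_F_bound: "F (F_bound n) n = {0}"
  unfolding F_bound_def using F_bounded by (rule someI_ex)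

lemma filtration_splitting_W_lvl: "filtration_splitting s (\<lambda>q. F q n) (\<lambda>q. W_lvl q n) (F_bound n)"
proof unfold_locales
  show "complement_in (W_lvl q n) (F (q + 1) n) (F q n)" for q
    unfolding complement_in_def
    using subspace_W_lvl W_lvl_subset_F W_lvl_inter_F_Suc F_split_W_lvl by blast
qed (rule subspace_F F_Suc_subset F_F_bound)+

definition component :: "int \<Rightarrow> 'a \<Rightarrow> int \<Rightarrow> 'a" where
  "component n = split_comp (\<lambda>q. W_lvl q n)"

lemma component:
  assumes "v \<in> A n"
  shows "component n v q \<in> W_lvl q n"
    and "finite {q. component n v q \<noteq> 0}"
    and "v = sum (component n v) {q. component n v q \<noteq> 0}"
proof -
  obtain p where "v \<in> F p n" using A_F[OF assms] by blast
  note split = filtration_splitting.split_comp[OF filtration_splitting_W_lvl this]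
  show "component n v q \<in> W_lvl q n" "finite {q. component n v q \<noteq> 0}"
      "v = sum (component n v) {q. component n v q \<noteq> 0}"
    using split unfolding component_def by blast+
qed

lemma sum_W_lvl_F:
  assumes "\<And>q. q \<in> S \<Longrightarrow> \<phi> q \<in> W_lvl q n \<and> p \<le> q"
  shows "sum \<phi> S \<in> F p n"
  by (rule filtration_splitting.sum_W_in_G[OF filtration_splitting_W_lvl]) (rule assms)

lemma component_sum:
  assumes "\<And>q. \<phi> q \<in> W_lvl q n" "finite S" "\<And>q. \<phi> q \<noteq> 0 \<Longrightarrow> q \<in> S"
  shows "component n (sum \<phi> S) = \<phi>"
  unfolding component_def
  by (rule filtration_splitting.split_comp_sum[OF filtration_splitting_W_lvl assms])

lemma component_below: "v \<in> F p n \<Longrightarrow> q < p \<Longrightarrow> component n v q = 0"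
  unfolding component_def by (rule filtration_splitting.split_comp_below[OF filtration_splitting_W_lvl])

lemma F_if_component_below:
  assumes "v \<in> A n" "\<And>q. q < p \<Longrightarrow> component n v q = 0"
  shows "v \<in> F p n"
proof -
  obtain r where "v \<in> F r n" using A_F[OF assms(1)] by blast
  then show ?thesis
    by (rule filtration_splitting.in_G_if_split_comp_below[OF filtration_splitting_W_lvl])
      (use assms(2) in \<open>simp add: component_def\<close>)
qed

lemma component_add:
  assumes "v \<in> A n" "w \<in> A n"
  shows "component n (v + w) = (\<lambda>q. component n v q + component n w q)"
proof -
  obtain p r where "v \<in> F p n" "w \<in> F r n" using A_F assms by blast
  then show ?thesis
    unfolding component_def by (rule filtration_splitting.split_comp_add[OF filtration_splitting_W_lvl])
qed

lemma component_scale: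
  assumes "v \<in> A n"
  shows "component n (s c v) = (\<lambda>q. s c (component n v q))"
proof -
  obtain p where "v \<in> F p n" using A_F assms by blast
  then show ?thesis
    unfolding component_def by (rule filtration_splitting.split_comp_scale[OF filtration_splitting_W_lvl])
qed

lemma component_eq_0_iff:
  assumes "v \<in> A n"
  shows "component n v = (\<lambda>_. 0) \<longleftrightarrow> v = 0"
proof -
  obtain p where "v \<in> F p n" using A_F assms by blast
  then show ?thesis
    unfolding component_def by (rule filtration_splitting.split_comp_eq_0_iff[OF filtration_splitting_W_lvl])
qed

lemma component_diff:
  assumes "v \<in> A n" "w \<in> A n"
  shows "component n (v - w) = (\<lambda>q. component n v q - component n w q)"
proof -
  have "component n v = component n ((v - w) + w)" by simp
  also have "\<dots> = (\<lambda>q. component n (v - w) q + component n w q)"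
    using component_add subspace_diff[OF subspace_A assms] assms(2) by blast
  finally show ?thesis by (simp add: fun_eq_iff)
qed

lemma sum_lvl:
  assumes "\<And>q. \<phi> q \<in> W_lvl q n" "finite S" "\<And>q. \<phi> q \<noteq> 0 \<Longrightarrow> q \<in> S \<and> p \<le> q"
  shows "sum \<phi> S \<in> F p n" and "component n (sum \<phi> S) = \<phi>"
proof -
  have "sum \<phi> S = sum \<phi> {q \<in> S. p \<le> q}"
    by (rule sum.mono_neutral_right) (use assms(2,3) in auto)
  moreover have "sum \<phi> {q \<in> S. p \<le> q} \<in> F p n"
    by (rule sum_W_lvl_F) (use assms(1) in blast)
  ultimately show "sum \<phi> S \<in> F p n" by simp
  show "component n (sum \<phi> S) = \<phi>"
    by (rule component_sum) (use assms in blast)+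
qed

definition tot :: "(int \<Rightarrow> int \<Rightarrow> 'a set) \<Rightarrow> int \<Rightarrow> 'a set" where
  "tot X n = {v \<in> A n. \<forall>q. component n v q \<in> X q n}"

lemma subspace_tot:
  assumes "\<And>q. subspace (X q n)"
  shows "subspace (tot X n)"
proof (rule subspaceI)
  show "0 \<in> tot X n"
    using component_eq_0_iff[OF subspace_0[OF subspace_A]] subspace_0[OF assms] subspace_0[OF subspace_A]
    by (simp add: tot_def)
  show "x + y \<in> tot X n" if "x \<in> tot X n" "y \<in> tot X n" for x y
    using that by (simp add: tot_def component_add subspace_add[OF subspace_A] subspace_add[OF assms])
  show "s c x \<in> tot X n" if "x \<in> tot X n" for c x
    using that by (simp add: tot_def component_scale subspace_scale[OF subspace_A] subspace_scale[OF assms])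
qed

lemma tot_A: "x \<in> tot X n \<Longrightarrow> x \<in> A n"
  by (simp add: tot_def)

definition D_tot :: "int \<Rightarrow> 'a set" where
  "D_tot n = d (n - 1) ` tot C_lvl (n - 1)"

lemma component_d_C:
  assumes c: "c \<in> tot C_lvl n"
  shows "component (n + 1) (d n c) = (\<lambda>q. d n (component n c q))"
proof -
  define S where "S = {q. component n c q \<noteq> 0}"
  have cA: "c \<in> A n" and cq: "\<And>q. component n c q \<in> C_lvl q n"
    using c by (simp_all add: tot_def)
  have "d n c = d n (sum (component n c) S)" using component(3)[OF cA] by (simp add: S_def)
  also have "\<dots> = sum (\<lambda>q. d n (component n c q)) S"
    by (rule d_sum) (use cq C_lvl_A in blast)
  also have "component (n + 1) \<dots> = (\<lambda>q. d n (component n c q))"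
  proof (rule component_sum)
    show "d n (component n c q) \<in> W_lvl q (n + 1)" for q
      using cq[of q] by (intro D_lvl_W_lvl) (simp add: D_lvl_def)
    show "finite S" using component(2)[OF cA] by (simp add: S_def)
    show "d n (component n c q) \<noteq> 0 \<Longrightarrow> q \<in> S" for q
      by (auto simp: S_def d_0)
  qed
  finally show ?thesis .
qed

lemma sum_W_lvl_A: "(\<And>q. q \<in> S \<Longrightarrow> \<phi> q \<in> W_lvl q n) \<Longrightarrow> sum \<phi> S \<in> A n"
  by (rule subspace_sum[OF subspace_A]) (use W_lvl_subset_F F_A in blast)

lemma D_tot_eq_tot: "D_tot n = tot D_lvl n"
proof (intro set_eqI iffI)
  fix v assume "v \<in> D_tot n"
  then obtain c where c: "c \<in> tot C_lvl (n - 1)" "v = d (n - 1) c" by (auto simp: D_tot_def)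
  have "component n v q = d (n - 1) (component (n - 1) c q)" for q
    using component_d_C[OF c(1)] c(2) by simp
  moreover have "component (n - 1) c q \<in> C_lvl q (n - 1)" for q using c(1) by (simp add: tot_def)
  ultimately have "component n v q \<in> D_lvl q n" for q unfolding D_lvl_def by blast
  moreover have "v \<in> A n" using d_A_pred[OF tot_A[OF c(1)]] c(2) by simp
  ultimately show "v \<in> tot D_lvl n" by (simp add: tot_def)
next
  fix v assume v: "v \<in> tot D_lvl n"
  then have vA: "v \<in> A n" by (rule tot_A)
  have "\<forall>q. \<exists>c. c \<in> C_lvl q (n - 1) \<and> component n v q = d (n - 1) c"
    using v by (auto simp: tot_def D_lvl_def)
  then have "\<exists>cf. \<forall>q. cf q \<in> C_lvl q (n - 1) \<and> component n v q = d (n - 1) (cf q)"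
    by (rule choice)
  then obtain cf where cf: "\<forall>q. cf q \<in> C_lvl q (n - 1) \<and> component n v q = d (n - 1) (cf q)"
    by blast
  define S where "S = {q. component n v q \<noteq> 0}"
  have S: "finite S" using component(2)[OF vA] by (simp add: S_def)
  have cf_W: "cf q \<in> W_lvl q (n - 1)" for q using cf C_lvl_W_lvl by blast
  have supp: "q \<in> S" if "cf q \<noteq> 0" for q
    using d_C_lvl_eq_0[of "cf q" q "n - 1"] cf that subspace_0[OF subspace_F] by (auto simp: S_def)
  have "component (n - 1) (sum cf S) = cf" by (rule component_sum[OF cf_W S supp])
  then have c: "sum cf S \<in> tot C_lvl (n - 1)"
    using sum_W_lvl_A[OF cf_W] cf by (simp add: tot_def)
  have "d (n - 1) (sum cf S) = sum (\<lambda>q. d (n - 1) (cf q)) S"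
    by (rule d_sum) (use cf C_lvl_A in blast)
  also have "\<dots> = v" using component(3)[OF vA] cf by (simp add: S_def)
  finally have "v = d (n - 1) (sum cf S)" by simp
  then show "v \<in> D_tot n" unfolding D_tot_def by (rule rev_image_eqI[OF c])
qed

lemma subspace_D_tot: "subspace (D_tot n)"
  unfolding D_tot_eq_tot by (rule subspace_tot[OF subspace_D_lvl])

lemma W_lvl_decomp_choice:
  assumes "\<And>q. \<phi> q \<in> W_lvl q n"
  obtains cf hf ef where "\<And>q. cf q \<in> C_lvl q n" "\<And>q. hf q \<in> H_lvl q n" "\<And>q. ef q \<in> D_lvl q n"
    and "\<And>q. \<phi> q = cf q + hf q + ef q" and "\<And>q. \<phi> q = 0 \<Longrightarrow> cf q = 0 \<and> hf q = 0 \<and> ef q = 0"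
proof -
  have "\<forall>q. \<exists>ch. fst ch \<in> C_lvl q n \<and> snd ch \<in> H_lvl q n \<and> \<phi> q - fst ch - snd ch \<in> D_lvl q n"
  proof
    fix q
    obtain c h e where "c \<in> C_lvl q n" "h \<in> H_lvl q n" "e \<in> D_lvl q n" "\<phi> q = c + h + e"
      using assms by (rule W_lvl_E)
    then show "\<exists>ch. fst ch \<in> C_lvl q n \<and> snd ch \<in> H_lvl q n \<and> \<phi> q - fst ch - snd ch \<in> D_lvl q n"
      by (intro exI[of _ "(c, h)"]) (simp add: algebra_simps)
  qed
  then have "\<exists>f. \<forall>q. fst (f q) \<in> C_lvl q n \<and> snd (f q) \<in> H_lvl q n \<and>
      \<phi> q - fst (f q) - snd (f q) \<in> D_lvl q n"
    by (rule choice)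
  then obtain f where f: "\<forall>q. fst (f q) \<in> C_lvl q n \<and> snd (f q) \<in> H_lvl q n \<and>
      \<phi> q - fst (f q) - snd (f q) \<in> D_lvl q n"
    by blast
  define cf hf ef where "cf q = fst (f q)" and "hf q = snd (f q)" and "ef q = \<phi> q - cf q - hf q" for q
  have cf: "cf q \<in> C_lvl q n" and hf: "hf q \<in> H_lvl q n" and ef: "ef q \<in> D_lvl q n"
    and sum: "\<phi> q = cf q + hf q + ef q" for q
    using f by (simp_all add: cf_def hf_def ef_def)
  have "cf q = 0 \<and> hf q = 0 \<and> ef q = 0" if "\<phi> q = 0" for q
    using W_lvl_decomp_unique[OF cf hf ef subspace_0[OF subspace_C_lvl] subspace_0[OF subspace_H_lvl]
        subspace_0[OF subspace_D_lvl]] sum[of q] that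
    by simp
  then show ?thesis using that cf hf ef sum by blast
qed

lemma CHD_decomp_F:
  assumes a: "a \<in> F p n"
  obtains c h e where "c \<in> tot C_lvl n" "h \<in> tot H_lvl n" "e \<in> D_tot n"
    and "c \<in> F p n" "h \<in> F p n" "e \<in> F p n" "a = c + h + e"
proof -
  have aA: "a \<in> A n" using a by (rule F_A)
  obtain cf hf ef where f: "\<And>q. cf q \<in> C_lvl q n" "\<And>q. hf q \<in> H_lvl q n" "\<And>q. ef q \<in> D_lvl q n"
    "\<And>q. component n a q = cf q + hf q + ef q"
    and f_0: "\<And>q. component n a q = 0 \<Longrightarrow> cf q = 0 \<and> hf q = 0 \<and> ef q = 0"
    using W_lvl_decomp_choice[OF component(1)[OF aA]] by blast
  define S where "S = {q. component n a q \<noteq> 0}"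
  have S: "finite S" using component(2)[OF aA] by (simp add: S_def)
  have supp: "q \<in> S \<and> p \<le> q" if "component n a q \<noteq> 0" for q
    using that component_below[OF a] by (force simp: S_def)
  have c: "sum cf S \<in> F p n" "component n (sum cf S) = cf"
    by (rule sum_lvl[OF C_lvl_W_lvl[OF f(1)] S]; use f_0 supp in blast)+
  have h: "sum hf S \<in> F p n" "component n (sum hf S) = hf"
    by (rule sum_lvl[OF H_lvl_W_lvl[OF f(2)] S]; use f_0 supp in blast)+
  have e: "sum ef S \<in> F p n" "component n (sum ef S) = ef"
    by (rule sum_lvl[OF D_lvl_W_lvl[OF f(3)] S]; use f_0 supp in blast)+
  have "a = sum (component n a) S" using component(3)[OF aA] by (simp add: S_def)
  also have "\<dots> = sum cf S + sum hf S + sum ef S" by (simp add: f(4) sum.distrib)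
  finally have "a = sum cf S + sum hf S + sum ef S" .
  moreover have "sum cf S \<in> tot C_lvl n" "sum hf S \<in> tot H_lvl n" "sum ef S \<in> D_tot n"
    using c h e f F_A unfolding D_tot_eq_tot tot_def by auto
  ultimately show ?thesis using that c(1) h(1) e(1) by blast
qed

lemma CHD_sum_eq_0D:
  assumes "c \<in> tot C_lvl n" "h \<in> tot H_lvl n" "e \<in> D_tot n" "c + h + e = 0"
  shows "c = 0 \<and> h = 0 \<and> e = 0"
proof -
  have A: "c \<in> A n" "h \<in> A n" "e \<in> A n" using assms(1-3) tot_A unfolding D_tot_eq_tot by blast+
  have "component n (c + h + e) = (\<lambda>q. component n c q + component n h q + component n e q)"
    using component_add[OF subspace_add[OF subspace_A A(1,2)] A(3)] component_add[OF A(1,2)] by simp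
  moreover have "component n (c + h + e) = (\<lambda>_. 0)"
    using assms(4) component_eq_0_iff[OF subspace_0[OF subspace_A]] by simp
  ultimately have "component n c q + component n h q + component n e q = 0 + 0 + 0" for q
    by (simp add: fun_eq_iff)
  then have "component n c q = 0 \<and> component n h q = 0 \<and> component n e q = 0" for q
    using W_lvl_decomp_unique subspace_0[OF subspace_C_lvl] subspace_0[OF subspace_H_lvl]
      subspace_0[OF subspace_D_lvl] assms(1-3)
    unfolding D_tot_eq_tot tot_def by blast
  then have "component n c = (\<lambda>_. 0)" "component n h = (\<lambda>_. 0)" "component n e = (\<lambda>_. 0)"
    by auto
  then show ?thesis
    using component_eq_0_iff[OF A(1)] component_eq_0_iff[OF A(2)] component_eq_0_iff[OF A(3)] by simp
qed

lemma d_C_tot_F: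
  assumes c: "c \<in> tot C_lvl n" and dc: "d n c \<in> F p (n + 1)"
  shows "c \<in> F p n"
proof (rule F_if_component_below)
  show "c \<in> A n" using c by (rule tot_A)
  fix q assume "q < p"
  then have "component (n + 1) (d n c) q = 0" by (rule component_below[OF dc])
  then have "d n (component n c q) = 0" by (simp add: component_d_C[OF c])
  moreover have "component n c q \<in> C_lvl q n" using c by (simp add: tot_def)
  ultimately show "component n c q = 0"
    using d_C_lvl_eq_0 subspace_0[OF subspace_F] by simp
qed

lemma d_C_tot_eq_0:
  assumes "c \<in> tot C_lvl n" "d n c = 0"
  shows "c = 0"
proof -
  have "c \<in> F (F_bound n) n"
    by (rule d_C_tot_F[OF assms(1)]) (simp add: assms(2) subspace_0[OF subspace_F])
  then show ?thesis using F_F_bound by simp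
qed

lemma d_H_tot_F_Suc:
  assumes h: "h \<in> tot H_lvl n" and hp: "h \<in> F p n"
  shows "d n h \<in> F (p + 1) (n + 1)"
proof -
  define S where "S = {q. component n h q \<noteq> 0}"
  have hA: "h \<in> A n" and hq: "\<And>q. component n h q \<in> H_lvl q n"
    using h by (simp_all add: tot_def)
  have "d n h = d n (sum (component n h) S)" using component(3)[OF hA] by (simp add: S_def)
  also have "\<dots> = sum (\<lambda>q. d n (component n h q)) S"
    by (rule d_sum) (use hq H_lvl_subset_F F_A in blast)
  also have "\<dots> \<in> F (p + 1) (n + 1)"
  proof (rule subspace_sum[OF subspace_F])
    fix q assume "q \<in> S"
    then have "p \<le> q" using component_below[OF hp] by (force simp: S_def)
    moreover have "d n (component n h q) \<in> F (q + 1) (n + 1)"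
      using hq[of q] H_lvl_subset_Z1 by (auto simp: Z1_def)
    ultimately show "d n (component n h q) \<in> F (p + 1) (n + 1)"
      using F_antimono[of "p + 1" "q + 1"] by auto
  qed
  finally show ?thesis .
qed

definition CHD_decomp :: "int \<Rightarrow> 'a \<Rightarrow> 'a \<Rightarrow> 'a \<Rightarrow> 'a \<Rightarrow> bool" where
  "CHD_decomp n a c h e \<longleftrightarrow> c \<in> tot C_lvl n \<and> h \<in> tot H_lvl n \<and> e \<in> D_tot n \<and> a = c + h + e"

definition proj_C :: "int \<Rightarrow> 'a \<Rightarrow> 'a" where
  "proj_C n a = (THE c. \<exists>h e. CHD_decomp n a c h e)"

definition proj_H :: "int \<Rightarrow> 'a \<Rightarrow> 'a" where
  "proj_H n a = (THE h. \<exists>c e. CHD_decomp n a c h e)"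

definition proj_D :: "int \<Rightarrow> 'a \<Rightarrow> 'a" where
  "proj_D n a = (THE e. \<exists>c h. CHD_decomp n a c h e)"

lemma subspace_C_tot: "subspace (tot C_lvl n)"
  and subspace_H_tot: "subspace (tot H_lvl n)"
  by (rule subspace_tot, rule subspace_C_lvl subspace_H_lvl)+

lemma CHD_decomp_unique:
  assumes "CHD_decomp n a c h e" "CHD_decomp n a c' h' e'"
  shows "c = c' \<and> h = h' \<and> e = e'"
proof -
  have "c - c' \<in> tot C_lvl n" "h - h' \<in> tot H_lvl n" "e - e' \<in> D_tot n"
    using assms subspace_diff[OF subspace_C_tot] subspace_diff[OF subspace_H_tot]
      subspace_diff[OF subspace_D_tot]
    by (auto simp: CHD_decomp_def)
  moreover have "(c - c') + (h - h') + (e - e') = 0"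
    using assms by (auto simp: CHD_decomp_def algebra_simps)
  ultimately show ?thesis using CHD_sum_eq_0D by fastforce
qed

lemma proj_eq:
  assumes "CHD_decomp n a c h e"
  shows "proj_C n a = c" "proj_H n a = h" "proj_D n a = e"
  unfolding proj_C_def proj_H_def proj_D_def
  by (rule the_equality; use assms CHD_decomp_unique in blast)+

lemma CHD_decomp_proj_F:
  assumes "a \<in> F p n"
  shows "CHD_decomp n a (proj_C n a) (proj_H n a) (proj_D n a)"
    and "proj_C n a \<in> F p n" "proj_H n a \<in> F p n" "proj_D n a \<in> F p n"
proof -
  obtain c h e where "c \<in> tot C_lvl n" "h \<in> tot H_lvl n" "e \<in> D_tot n"
    and F: "c \<in> F p n" "h \<in> F p n" "e \<in> F p n" and "a = c + h + e"
    by (rule CHD_decomp_F[OF assms])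
  then have "CHD_decomp n a c h e" by (simp add: CHD_decomp_def)
  then show "CHD_decomp n a (proj_C n a) (proj_H n a) (proj_D n a)"
    "proj_C n a \<in> F p n" "proj_H n a \<in> F p n" "proj_D n a \<in> F p n"
    using F by (simp_all add: proj_eq)
qed

lemma CHD_decomp_proj: "a \<in> A n \<Longrightarrow> CHD_decomp n a (proj_C n a) (proj_H n a) (proj_D n a)"
  using A_F CHD_decomp_proj_F(1) by blast

lemma proj_C_tot: "a \<in> A n \<Longrightarrow> proj_C n a \<in> tot C_lvl n"
  and proj_H_tot: "a \<in> A n \<Longrightarrow> proj_H n a \<in> tot H_lvl n"
  and proj_D_tot: "a \<in> A n \<Longrightarrow> proj_D n a \<in> D_tot n"
  and proj_sum: "a \<in> A n \<Longrightarrow> a = proj_C n a + proj_H n a + proj_D n a"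
  using CHD_decomp_proj unfolding CHD_decomp_def by blast+

lemma CHD_decomp_add:
  "CHD_decomp n a c h e \<Longrightarrow> CHD_decomp n b c' h' e' \<Longrightarrow>
    CHD_decomp n (a + b) (c + c') (h + h') (e + e')"
  unfolding CHD_decomp_def
  using subspace_add[OF subspace_C_tot] subspace_add[OF subspace_H_tot] subspace_add[OF subspace_D_tot]
  by (auto simp: algebra_simps)

lemma CHD_decomp_scale: "CHD_decomp n a c h e \<Longrightarrow> CHD_decomp n (s r a) (s r c) (s r h) (s r e)"
  unfolding CHD_decomp_def
  using subspace_scale[OF subspace_C_tot] subspace_scale[OF subspace_H_tot] subspace_scale[OF subspace_D_tot]
  by (auto simp: scale_right_distrib)

lemma proj_add:
  assumes "a \<in> A n" "b \<in> A n"
  shows "proj_C n (a + b) = proj_C n a + proj_C n b" "proj_H n (a + b) = proj_H n a + proj_H n b"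
    "proj_D n (a + b) = proj_D n a + proj_D n b"
  using proj_eq[OF CHD_decomp_add[OF CHD_decomp_proj[OF assms(1)] CHD_decomp_proj[OF assms(2)]]] by simp_all

lemma proj_scale:
  assumes "a \<in> A n"
  shows "proj_C n (s r a) = s r (proj_C n a)" "proj_H n (s r a) = s r (proj_H n a)"
    "proj_D n (s r a) = s r (proj_D n a)"
  using proj_eq[OF CHD_decomp_scale[OF CHD_decomp_proj[OF assms]]] by simp_all

lemma proj_diff:
  assumes "a \<in> A n" "b \<in> A n"
  shows "proj_C n (a - b) = proj_C n a - proj_C n b" "proj_H n (a - b) = proj_H n a - proj_H n b"
    "proj_D n (a - b) = proj_D n a - proj_D n b"
proof -
  have "a - b \<in> A n" using subspace_diff[OF subspace_A assms] .
  from proj_add[OF this assms(2)]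
  show "proj_C n (a - b) = proj_C n a - proj_C n b" "proj_H n (a - b) = proj_H n a - proj_H n b"
    "proj_D n (a - b) = proj_D n a - proj_D n b"
    by (simp_all add: algebra_simps)
qed

lemma CHD_decomp_CD: "c \<in> tot C_lvl n \<Longrightarrow> e \<in> D_tot n \<Longrightarrow> CHD_decomp n (c + e) c 0 e"
  and CHD_decomp_H: "h \<in> tot H_lvl n \<Longrightarrow> CHD_decomp n h 0 h 0"
  unfolding CHD_decomp_def
  using subspace_0[OF subspace_C_tot] subspace_0[OF subspace_H_tot] subspace_0[OF subspace_D_tot]
  by simp_all

lemma proj_D_C_plus_D: "c \<in> tot C_lvl n \<Longrightarrow> e \<in> D_tot n \<Longrightarrow> proj_D n (c + e) = e"
  by (rule proj_eq(3)[OF CHD_decomp_CD])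

lemma proj_D_D: "e \<in> D_tot n \<Longrightarrow> proj_D n e = e"
  using proj_D_C_plus_D[OF subspace_0[OF subspace_C_tot]] by simp

text \<open>The homotopy is \<open>d\<^sup>-\<^sup>1 \<circ> proj_D\<close>, using that \<open>d\<close> maps \<open>C\<close> isomorphically onto \<open>D\<close>.\<close>
definition htpy :: "int \<Rightarrow> 'a \<Rightarrow> 'a" where
  "htpy n a = (THE c. c \<in> tot C_lvl (n - 1) \<and> d (n - 1) c = proj_D n a)"

lemma htpy_eq:
  assumes "c \<in> tot C_lvl (n - 1)" "d (n - 1) c = proj_D n a"
  shows "htpy n a = c"
  unfolding htpy_def
proof (rule the_equality)
  fix c' assume c': "c' \<in> tot C_lvl (n - 1) \<and> d (n - 1) c' = proj_D n a"
  then have "d (n - 1) (c' - c) = 0"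
    using d_diff[OF tot_A tot_A, of c' C_lvl "n - 1" c] assms by simp
  moreover have "c' - c \<in> tot C_lvl (n - 1)" using c' assms subspace_diff[OF subspace_C_tot] by blast
  ultimately show "c' = c" using d_C_tot_eq_0 by fastforce
qed (use assms in blast)

lemma htpy:
  assumes "a \<in> A n"
  shows "htpy n a \<in> tot C_lvl (n - 1)" and "d (n - 1) (htpy n a) = proj_D n a"
proof -
  obtain c where "c \<in> tot C_lvl (n - 1)" "d (n - 1) c = proj_D n a"
    using proj_D_tot[OF assms] by (auto simp: D_tot_def)
  then show "htpy n a \<in> tot C_lvl (n - 1)" "d (n - 1) (htpy n a) = proj_D n a"
    using htpy_eq by simp_all
qed

lemma htpy_A: "a \<in> A n \<Longrightarrow> htpy n a \<in> A (n - 1)"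
  using htpy(1) tot_A by blast

lemma htpy_add: "a \<in> A n \<Longrightarrow> b \<in> A n \<Longrightarrow> htpy n (a + b) = htpy n a + htpy n b"
  by (rule htpy_eq)
    (use htpy subspace_add[OF subspace_C_tot] d_add htpy_A proj_add in simp_all)

lemma htpy_scale: "a \<in> A n \<Longrightarrow> htpy n (s r a) = s r (htpy n a)"
  by (rule htpy_eq) (use htpy subspace_scale[OF subspace_C_tot] d_scale htpy_A proj_scale in simp_all)

lemma htpy_F:
  assumes "a \<in> F p n"
  shows "htpy n a \<in> F p (n - 1)"
proof -
  have "d (n - 1) (htpy n a) \<in> F p (n - 1 + 1)"
    using htpy(2)[OF F_A[OF assms]] CHD_decomp_proj_F(4)[OF assms] by simp
  then show ?thesis using d_C_tot_F htpy(1)[OF F_A[OF assms]] by blast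
qed

lemma idempotent_dh_hd_htpy: "idempotent_dh_hd s A d F htpy"
proof unfold_locales
  show "lin_on s (A n) (htpy n)" for n
    unfolding lin_on_def using htpy_add htpy_scale by blast
  show "htpy n x \<in> F p (n - 1)" if "x \<in> F p n" for x p n
    using htpy_F that .
  fix a n assume a: "a \<in> A n"
  let ?c = "htpy (n + 1) (d n a)" and ?e = "d (n - 1) (htpy n a)"
  have c: "?c \<in> tot C_lvl n" using htpy(1)[OF d_A[OF a]] by simp
  have e: "?e \<in> D_tot n" using htpy(1)[OF a] by (simp add: D_tot_def)
  have cA: "?c \<in> A n" and eA: "?e \<in> A n" using c e tot_A D_tot_eq_tot by blast+
  have "d n ?e = 0" using dd_pred[OF htpy_A[OF a]] .
  then have "d n (?c + ?e) = d n ?c" using d_add[OF cA eA] by simp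
  moreover have "d n ?c \<in> D_tot (n + 1)" using c by (simp add: D_tot_def)
  then have "htpy (n + 1) (d n ?c) = ?c"
    by (intro htpy_eq) (simp_all add: c proj_D_D)
  moreover have "htpy n (?c + ?e) = htpy n a"
    by (rule htpy_eq) (simp_all add: htpy(1)[OF a] proj_D_C_plus_D[OF c e])
  ultimately show "dh_hd d htpy n (dh_hd d htpy n a) = dh_hd d htpy n a"
    by (simp add: dh_hd_def)
qed

end

section \<open>The retract and the \<open>E\<^sub>1\<close> page\<close>

context filtered_cx
begin

interpretation retract: idempotent_dh_hd s A d F htpy
  by (rule idempotent_dh_hd_htpy)

lemma htpy_eq_0: "a \<in> A n \<Longrightarrow> proj_D n a = 0 \<Longrightarrow> htpy n a = 0"
  by (rule htpy_eq) (simp_all add: d_0 subspace_0[OF subspace_C_tot])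

lemma ker_dh_hd_htpy_D:
  assumes "x \<in> ker_dh_hd A d htpy n"
  shows "proj_D n x = 0" and "htpy (n + 1) (d n x) = 0"
proof -
  have xA: "x \<in> A n" using assms by (simp add: ker_dh_hd_def)
  have c: "htpy (n + 1) (d n x) \<in> tot C_lvl n" using htpy(1)[OF d_A[OF xA]] by simp
  have e: "d (n - 1) (htpy n x) \<in> D_tot n" using htpy(1)[OF xA] by (simp add: D_tot_def)
  have "htpy (n + 1) (d n x) + 0 + d (n - 1) (htpy n x) = 0"
    using assms by (simp add: ker_dh_hd_def dh_hd_def)
  then have "htpy (n + 1) (d n x) = 0 \<and> d (n - 1) (htpy n x) = 0"
    using CHD_sum_eq_0D[OF c subspace_0[OF subspace_H_tot] e] by blast
  then show "proj_D n x = 0" "htpy (n + 1) (d n x) = 0"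
    using htpy(2)[OF xA] by simp_all
qed

lemma ker_dh_hd_htpy_proj_D_d:
  assumes "x \<in> ker_dh_hd A d htpy n"
  shows "proj_D (n + 1) (d n x) = 0"
proof -
  have "x \<in> A n" using assms by (simp add: ker_dh_hd_def)
  then show ?thesis
    using htpy(2)[OF d_A, of x n] ker_dh_hd_htpy_D(2)[OF assms] by (simp add: d_0)
qed

lemma d_ker_dh_hd_filt_Suc:
  assumes x: "x \<in> ker_dh_hd_filt A d htpy F p n"
  shows "d n x \<in> F (p + 1) (n + 1)"
proof -
  have xM: "x \<in> ker_dh_hd A d htpy n" and xF: "x \<in> F p n"
    using x by (simp_all add: ker_dh_hd_filt_def)
  have xA: "x \<in> A n" using F_A[OF xF] .
  let ?c = "proj_C n x" and ?h = "proj_H n x"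
  have c: "?c \<in> tot C_lvl n" and h: "?h \<in> tot H_lvl n" using proj_C_tot proj_H_tot xA by blast+
  have cA: "?c \<in> A n" and hA: "?h \<in> A n" using c h tot_A by blast+
  have dx: "d n x = d n ?c + d n ?h"
    using proj_sum[OF xA] ker_dh_hd_htpy_D(1)[OF xM] d_add[OF cA hA] by simp
  have dh: "d n ?h \<in> F (p + 1) (n + 1)"
    using d_H_tot_F_Suc[OF h CHD_decomp_proj_F(3)[OF xF]] .
  have "0 = proj_D (n + 1) (d n ?c) + proj_D (n + 1) (d n ?h)"
    using ker_dh_hd_htpy_proj_D_d[OF xM] dx proj_add(3)[OF d_A[OF cA] d_A[OF hA]] by simp
  also have "proj_D (n + 1) (d n ?c) = d n ?c"
    using c by (intro proj_D_D) (simp add: D_tot_def)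
  finally have "d n ?c = - proj_D (n + 1) (d n ?h)" by (simp add: eq_neg_iff_add_eq_0)
  then have "d n ?c \<in> F (p + 1) (n + 1)"
    using CHD_decomp_proj_F(4)[OF dh] subspace_neg[OF subspace_F] by simp
  then show ?thesis using dx dh subspace_add[OF subspace_F] by simp
qed

lemma ker_dh_hd_htpy_eq_0:
  assumes xM: "x \<in> ker_dh_hd A d htpy n" and h0: "proj_H n x = 0"
  shows "x = 0"
proof -
  have xA: "x \<in> A n" using xM by (simp add: ker_dh_hd_def)
  have x: "x = proj_C n x" using proj_sum[OF xA] ker_dh_hd_htpy_D(1)[OF xM] h0 by simp
  have c: "proj_C n x \<in> tot C_lvl n" using proj_C_tot[OF xA] .
  have "d n (proj_C n x) \<in> D_tot (n + 1)" using c by (simp add: D_tot_def)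
  then have "d n x = proj_D (n + 1) (d n x)" using x by (simp add: proj_D_D)
  then have "d n (proj_C n x) = 0" using ker_dh_hd_htpy_proj_D_d[OF xM] x by simp
  then show ?thesis using d_C_tot_eq_0[OF c] x by simp
qed

lemma ker_dh_hd_htpy_proj_H_onto:
  assumes y: "y \<in> tot H_lvl n" "y \<in> F p n"
  defines "x \<equiv> y - htpy (n + 1) (d n y)"
  shows "x \<in> ker_dh_hd_filt A d htpy F p n" and "proj_H n x = y"
proof -
  let ?c = "htpy (n + 1) (d n y)"
  have yA: "y \<in> A n" using y(1) by (rule tot_A)
  have dyA: "d n y \<in> A (n + 1)" using d_A[OF yA] .
  have c: "?c \<in> tot C_lvl n" using htpy(1)[OF dyA] by simp
  have cA: "?c \<in> A n" using c by (rule tot_A)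
  have xA: "x \<in> A n" unfolding x_def using subspace_diff[OF subspace_A yA cA] .
  have H: "CHD_decomp n y 0 y 0" and C: "CHD_decomp n ?c ?c 0 0"
    using CHD_decomp_H[OF y(1)] CHD_decomp_CD[OF c subspace_0[OF subspace_D_tot]] by simp_all
  have "proj_D n x = 0"
    unfolding x_def using proj_diff(3)[OF yA cA] proj_eq(3)[OF H] proj_eq(3)[OF C] by simp
  then have "htpy n x = 0" by (rule htpy_eq_0[OF xA])
  moreover have pD: "proj_D (n + 1) (d n y) \<in> D_tot (n + 1)" using proj_D_tot[OF dyA] .
  have "d n x = d n y - proj_D (n + 1) (d n y)"
    unfolding x_def using d_diff[OF yA cA] htpy(2)[OF dyA] by simp
  then have "proj_D (n + 1) (d n x) = 0"
    using proj_diff(3)[OF dyA tot_A[OF pD[unfolded D_tot_eq_tot]]] proj_D_D[OF pD] by simp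
  then have "htpy (n + 1) (d n x) = 0" by (rule htpy_eq_0[OF d_A[OF xA]])
  ultimately have "x \<in> ker_dh_hd A d htpy n" using xA by (simp add: ker_dh_hd_def dh_hd_def d_0)
  moreover have "?c \<in> F p n" using htpy_F[OF d_F[OF y(2)]] by simp
  then have "x \<in> F p n" unfolding x_def using subspace_diff[OF subspace_F y(2)] by blast
  ultimately show "x \<in> ker_dh_hd_filt A d htpy F p n" by (simp add: ker_dh_hd_filt_def)
  show "proj_H n x = y"
    unfolding x_def using proj_diff(2)[OF yA cA] proj_eq(2)[OF H] proj_eq(2)[OF C] by simp
qed

definition E1_class :: "int \<Rightarrow> 'a \<Rightarrow> int \<Rightarrow> 'a set" where
  "E1_class n x q = coset (B1 d F q n) (component n (proj_H n x) q)"

lemma E1_class_in: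
  assumes x: "x \<in> ker_dh_hd_filt A d htpy F p n"
  shows "E1_class n x \<in> E1_sum d F p n"
proof -
  have xF: "x \<in> F p n" using x by (simp add: ker_dh_hd_filt_def)
  let ?y = "proj_H n x"
  have y: "?y \<in> tot H_lvl n" "?y \<in> F p n"
    using proj_H_tot[OF F_A[OF xF]] CHD_decomp_proj_F(3)[OF xF] by simp_all
  have zero: "E1_class n x q = B1 d F q n" if "component n ?y q = 0" for q
    using that by (simp add: E1_class_def coset_0[OF subspace_B1])
  have "component n ?y q \<in> Z1 d F q n" for q
    using y(1) H_lvl_subset_Z1 by (auto simp: tot_def)
  then have "E1_class n x q \<in> E1 d F q (n - q)" for q by (simp add: E1_class_def E1_def)
  moreover have "E1_class n x q = B1 d F q n" if "q < p" for q
    using zero component_below[OF y(2) that] by blast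
  moreover have "finite {q. E1_class n x q \<noteq> B1 d F q n}"
    by (rule finite_subset[OF _ component(2)[OF tot_A[OF y(1)]]]) (use zero in blast)
  ultimately show ?thesis by (simp add: E1_sum_def)
qed

lemma E1_class_inj: "inj_on (E1_class n) (ker_dh_hd_filt A d htpy F p n)"
proof (rule inj_onI)
  fix x x' assume x: "x \<in> ker_dh_hd_filt A d htpy F p n" and x': "x' \<in> ker_dh_hd_filt A d htpy F p n"
    and eq: "E1_class n x = E1_class n x'"
  have xA: "x \<in> A n" "x' \<in> A n" using x x' by (simp_all add: ker_dh_hd_filt_def ker_dh_hd_def)
  have h: "proj_H n x \<in> tot H_lvl n" "proj_H n x' \<in> tot H_lvl n" using proj_H_tot xA by blast+
  have "component n (proj_H n x) q - component n (proj_H n x') q = 0" for q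
  proof (rule H_lvl_inter_B1)
    show "component n (proj_H n x) q - component n (proj_H n x') q \<in> H_lvl q n"
      using h subspace_diff[OF subspace_H_lvl] by (simp add: tot_def)
    show "component n (proj_H n x) q - component n (proj_H n x') q \<in> B1 d F q n"
      using eq coset_eq_iff[OF subspace_B1] by (metis E1_class_def)
  qed
  then have "component n (proj_H n (x - x')) = (\<lambda>_. 0)"
    using proj_diff(2)[OF xA] component_diff[OF tot_A[OF h(1)] tot_A[OF h(2)]] by auto
  then have "proj_H n (x - x') = 0"
    using component_eq_0_iff proj_H_tot[OF subspace_diff[OF subspace_A xA]] tot_A by blast
  moreover have "x - x' \<in> ker_dh_hd A d htpy n"
    using x x' subspace_diff[OF retract.subspace_ker_dh_hd] by (simp add: ker_dh_hd_filt_def)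
  ultimately show "x = x'" using ker_dh_hd_htpy_eq_0 by fastforce
qed

lemma E1_sum_tot_H:
  assumes \<phi>: "\<phi> \<in> E1_sum d F p n"
  obtains y where "y \<in> tot H_lvl n" "y \<in> F p n" "\<phi> = (\<lambda>q. coset (B1 d F q n) (component n y q))"
proof -
  have low: "\<phi> q = B1 d F q n" if "q < p" for q using \<phi> that by (simp add: E1_sum_def)
  have "\<exists>h. h \<in> H_lvl q n \<and> \<phi> q = coset (B1 d F q n) h \<and> (\<phi> q = B1 d F q n \<longrightarrow> h = 0)" for q
  proof (cases "\<phi> q = B1 d F q n")
    case True
    then show ?thesis using subspace_0[OF subspace_H_lvl] coset_0[OF subspace_B1] by auto
  next
    case False
    then have "p \<le> q" using low not_le by blast
    then have "\<phi> q \<in> E1 d F q (n - q)" using \<phi> by (simp add: E1_sum_def)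
    then obtain z where z: "z \<in> Z1 d F q n" "\<phi> q = coset (B1 d F q n) z" by (auto simp: E1_def)
    obtain h b where hb: "h \<in> H_lvl q n" "b \<in> B1 d F q n" "z = h + b"
      using Z1_split_H_lvl[OF z(1)] by blast
    have "coset (B1 d F q n) z = coset (B1 d F q n) h"
      using hb by (simp add: coset_eq_iff[OF subspace_B1])
    then show ?thesis using hb z False by auto
  qed
  then have "\<forall>q. \<exists>h. h \<in> H_lvl q n \<and> \<phi> q = coset (B1 d F q n) h \<and> (\<phi> q = B1 d F q n \<longrightarrow> h = 0)"
    by blast
  then have "\<exists>hf. \<forall>q. hf q \<in> H_lvl q n \<and> \<phi> q = coset (B1 d F q n) (hf q) \<and>
      (\<phi> q = B1 d F q n \<longrightarrow> hf q = 0)"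
    by (rule choice)
  then obtain hf where hf: "\<And>q. hf q \<in> H_lvl q n" "\<And>q. \<phi> q = coset (B1 d F q n) (hf q)"
    "\<And>q. \<phi> q = B1 d F q n \<Longrightarrow> hf q = 0"
    by blast
  define S where "S = {q. \<phi> q \<noteq> B1 d F q n}"
  have S: "finite S" using \<phi> by (simp add: E1_sum_def S_def)
  have supp: "q \<in> S \<and> p \<le> q" if "hf q \<noteq> 0" for q
    using that hf(3) low by (force simp: S_def)
  note y = sum_lvl[OF H_lvl_W_lvl[OF hf(1)] S supp]
  have "sum hf S \<in> tot H_lvl n" using y(2) hf(1) F_A[OF y(1)] by (simp add: tot_def)
  moreover have "\<phi> = (\<lambda>q. coset (B1 d F q n) (component n (sum hf S) q))"
    using hf(2) y(2) by auto
  ultimately show ?thesis using that y(1) by blast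
qed

lemma E1_class_surj: "E1_sum d F p n \<subseteq> E1_class n ` ker_dh_hd_filt A d htpy F p n"
proof
  fix \<phi> assume "\<phi> \<in> E1_sum d F p n"
  then obtain y where y: "y \<in> tot H_lvl n" "y \<in> F p n" "\<phi> = (\<lambda>q. coset (B1 d F q n) (component n y q))"
    by (rule E1_sum_tot_H)
  note x = ker_dh_hd_htpy_proj_H_onto[OF y(1,2)]
  have "E1_class n (y - htpy (n + 1) (d n y)) = \<phi>"
    using x(2) y(3) by (simp add: E1_class_def fun_eq_iff)
  then show "\<phi> \<in> E1_class n ` ker_dh_hd_filt A d htpy F p n" using x(1) by blast
qed

lemma E1_class_add:
  assumes "x \<in> A n" "y \<in> A n"
  shows "E1_class n (x + y) = E1_add (E1_class n x) (E1_class n y)"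
proof -
  have "component n (proj_H n (x + y)) = (\<lambda>q. component n (proj_H n x) q + component n (proj_H n y) q)"
    using proj_add(2)[OF assms] component_add[OF tot_A[OF proj_H_tot] tot_A[OF proj_H_tot]] assms
    by simp
  then show ?thesis
    by (simp add: E1_class_def E1_add_def coset_add[OF subspace_B1] fun_eq_iff)
qed

lemma E1_class_scale:
  assumes "x \<in> A n"
  shows "E1_class n (s r x) = E1_scale s d F n r (E1_class n x)"
proof -
  have "component n (proj_H n (s r x)) = (\<lambda>q. s r (component n (proj_H n x) q))"
    using proj_scale(2)[OF assms] component_scale[OF tot_A[OF proj_H_tot[OF assms]]] by simp
  then show ?thesis
    by (simp add: E1_class_def E1_scale_def coset_scale[OF subspace_B1] fun_eq_iff)
qed

lemma iso_E1_sum_ker_dh_hd_filt: "iso_E1_sum s (ker_dh_hd_filt A d htpy F p n) d F p n"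
  unfolding iso_E1_sum_def
proof (intro exI conjI ballI allI)
  show "bij_betw (E1_class n) (ker_dh_hd_filt A d htpy F p n) (E1_sum d F p n)"
    unfolding bij_betw_def using E1_class_inj E1_class_surj E1_class_in by blast
  fix x y assume "x \<in> ker_dh_hd_filt A d htpy F p n" "y \<in> ker_dh_hd_filt A d htpy F p n"
  then show "E1_class n (x + y) = E1_add (E1_class n x) (E1_class n y)"
    by (intro E1_class_add) (simp_all add: ker_dh_hd_filt_def ker_dh_hd_def)
next
  fix r x assume "x \<in> ker_dh_hd_filt A d htpy F p n"
  then show "E1_class n (s r x) = E1_scale s d F n r (E1_class n x)"
    by (intro E1_class_scale) (simp add: ker_dh_hd_filt_def ker_dh_hd_def)
qed

lemma d_ker_dh_hd_filt_htpy:
  "d n ` ker_dh_hd_filt A d htpy F p n \<subseteq> ker_dh_hd_filt A d htpy F (p + 1) (n + 1)"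
  using d_ker_dh_hd_filt_Suc retract.d_ker_dh_hd by (auto simp: ker_dh_hd_filt_def)

end

theorem theorem2p7:
  fixes s :: "'k::field \<Rightarrow> 'a::ab_group_add \<Rightarrow> 'a"
    and A :: "int \<Rightarrow> 'a set" and d :: "int \<Rightarrow> 'a \<Rightarrow> 'a" and F :: "int \<Rightarrow> int \<Rightarrow> 'a set"
  assumes "vector_space s"
    and "filtered_complex s A d F"
  shows "\<exists>(M :: int \<Rightarrow> 'a set) dM FM f g h.
           filtered_complex s M dM FM \<and>
           filtered_morphism s A d F M dM FM f \<and>
           filtered_morphism s M dM FM A d F g \<and>
           filtered_homotopy s A d F A d F h (\<lambda>n x. x) (\<lambda>n x. g n (f n x)) \<and>
           (\<forall>p n. iso_E1_sum s (FM p n) d F p n) \<and>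
           (\<forall>p n. dM n ` FM p n \<subseteq> FM (p + 1) (n + 1)) \<and>
           filtered_quasi_iso d F dM FM f \<and>
           filtered_quasi_iso dM FM d F g"
proof -
  interpret filtered_cx s A d F
    by (intro filtered_cx.intro filtered_cx_axioms.intro assms)
  interpret retract: idempotent_dh_hd s A d F htpy
    by (rule idempotent_dh_hd_htpy)
  show ?thesis
    by (intro exI[of _ "ker_dh_hd A d htpy"] exI[of _ d] exI[of _ "ker_dh_hd_filt A d htpy F"]
        exI[of _ "id_minus_dh_hd d htpy"] exI[of _ "\<lambda>n x. x"] exI[of _ htpy])
      (simp add: retract.filtered_complex_ker_dh_hd retract.filtered_morphism_id_minus_dh_hd
        retract.filtered_morphism_ker_dh_hd_incl retract.filtered_homotopy_h
        iso_E1_sum_ker_dh_hd_filt d_ker_dh_hd_filt_htpy retract.filtered_quasi_iso_id_minus_dh_hd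
        retract.filtered_quasi_iso_ker_dh_hd_incl)
qed

end
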